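(* Let $H=\sum_{\mathbf{j}\in V}h_{\mathbf{j}}$ be a Hamiltonian with claw-free frustration graph $G$. Then \[ Z_G(-u^2)=\sum_{\mathcal{X}\in\mathscr{C}^{(\mathrm{even})}_G}(-u^2)^{|\partial\mathcal{X}|/2}\,2^{|\mathcal{X}|}\,I_{G\setminus\Gamma[\partial\mathcal{X}]}(-u^2)\prod_{C\in\mathcal{X}}h_C . \]
   Context: Setting: $V$ a finite set of distinct $n$-qubit Pauli strings, $H=\sum_{\mathbf{j}\in V}h_{\mathbf{j}}$ with $h_{\mathbf{j}}=b_{\mathbf{j}}\sigma^{\mathbf{j}}$, $b_{\mathbf{j}}\in\mathbb{R}\setminus\{0\}$; frustration graph $G$: edge iff terms anticommute; claw-free: no induced $K_{1,3}$. For an independent set $S$, $h_S=\prod_{\mathbf{j}\in S}h_{\mathbf{j}}$. Transfer operator $T_G(u)=\sum_{S}(-u)^{|S|}h_S$ over all independent sets, and $Z_G(-u^2):=T_G(u)T_G(-u)$. Weighted independence polynomial $I_G(x)=\sum_S x^{|S|}\prod_{\mathbf{j}\in S}b_{\mathbf{j}}^2$. An even hole is an induced cycle of even length $\ge4$; for an even hole $C$ with colour classes $C_a,C_b$, $h_C=h_{C_a}h_{C_b}$. Two even holes are compatible iff they are disjoint with no edges between them. $\mathscr{C}^{(\mathrm{even})}_G$ is the collection of all sets $\mathcal{X}$ of pairwise compatible even holes (including $\emptyset$); $|\mathcal{X}|$ is the number of holes in $\mathcal{X}$, $\partial\mathcal{X}=\bigcup_{C\in\mathcal{X}}C$, and $\Gamma[\partial\mathcal{X}]$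 is the closed neighbourhood of $\partial\mathcal{X}$. *)

theory Defs
  imports "Jordan_Normal_Form.Matrix"
begin

datatype pauli = PI | PX | PY | PZ

fun pauli_entry :: "pauli \<Rightarrow> nat \<Rightarrow> nat \<Rightarrow> complex" where
  "pauli_entry PI r c = (if r = c then 1 else 0)"
| "pauli_entry PX r c = (if r \<noteq> c then 1 else 0)"
| "pauli_entry PY r c = (if r = 0 \<and> c = 1 then - \<i> else if r = 1 \<and> c = 0 then \<i> else 0)"
| "pauli_entry PZ r c = (if r = c then (if r = 0 then 1 else -1) else 0)"

text \<open>The n-qubit Pauli string sigma^j (tensor product of the single-qubit factors),
  written out entrywise: qubit k corresponds to bit k of the row/column index.\<close>
definition pauli_mat :: "pauli list \<Rightarrow> complex mat" where
  "pauli_mat p = mat (2 ^ length p) (2 ^ length p)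
     (\<lambda>(r, c). \<Prod>k<length p. pauli_entry (p ! k) (r div 2 ^ k mod 2) (c div 2 ^ k mod 2))"

definition hterm :: "(pauli list \<Rightarrow> real) \<Rightarrow> pauli list \<Rightarrow> complex mat" where
  "hterm b j = complex_of_real (b j) \<cdot>\<^sub>m pauli_mat j"

definition anticommute :: "complex mat \<Rightarrow> complex mat \<Rightarrow> bool" where
  "anticommute A B \<longleftrightarrow> A * B = - (B * A)"

definition fadj :: "pauli list set \<Rightarrow> pauli list \<Rightarrow> pauli list \<Rightarrow> bool" where
  "fadj V j k \<longleftrightarrow> j \<in> V \<and> k \<in> V \<and> j \<noteq> k \<and> anticommute (pauli_mat j) (pauli_mat k)"

definition claw_free :: "pauli list set \<Rightarrow> bool" where
  "claw_free V \<longleftrightarrow> \<not> (\<exists>v a b c. distinct [a, b, c] \<and>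
      fadj V v a \<and> fadj V v b \<and> fadj V v c \<and>
      \<not> fadj V a b \<and> \<not> fadj V a c \<and> \<not> fadj V b c)"

definition indep :: "pauli list set \<Rightarrow> pauli list set \<Rightarrow> bool" where
  "indep V S \<longleftrightarrow> S \<subseteq> V \<and> (\<forall>j\<in>S. \<forall>k\<in>S. \<not> fadj V j k)"

text \<open>Even hole: induced cycle of even length at least 4.\<close>
definition even_hole :: "pauli list set \<Rightarrow> pauli list set \<Rightarrow> bool" where
  "even_hole V C \<longleftrightarrow> C \<subseteq> V \<and> card C \<ge> 4 \<and> even (card C) \<and>
     (\<exists>vs. distinct vs \<and> set vs = C \<and>
        (\<forall>i<length vs. \<forall>k<length vs.
           fadj V (vs ! i) (vs ! k) \<longleftrightarrow>
             (k = Suc i mod length vs \<or> i = Suc k mod length vs)))"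

definition compatible :: "pauli list set \<Rightarrow> pauli list set \<Rightarrow> pauli list set \<Rightarrow> bool" where
  "compatible V C D \<longleftrightarrow> C \<inter> D = {} \<and> (\<forall>x\<in>C. \<forall>y\<in>D. \<not> fadj V x y)"

definition even_hole_configs :: "pauli list set \<Rightarrow> pauli list set set set" where
  "even_hole_configs V = {X. (\<forall>C\<in>X. even_hole V C) \<and>
      (\<forall>C\<in>X. \<forall>D\<in>X. C \<noteq> D \<longrightarrow> compatible V C D)}"

definition closed_nbhd :: "pauli list set \<Rightarrow> pauli list set \<Rightarrow> pauli list set" where
  "closed_nbhd V A = A \<union> {v\<in>V. \<exists>a\<in>A. fadj V v a}"

definition mat_prod_list :: "nat \<Rightarrow> complex mat list \<Rightarrow> complex mat" where
  "mat_prod_list d xs = foldr (*) xs (1\<^sub>m d)"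

definition mat_sum :: "nat \<Rightarrow> ('a \<Rightarrow> complex mat) \<Rightarrow> 'a set \<Rightarrow> complex mat" where
  "mat_sum d f A = mat d d (\<lambda>rc. \<Sum>x\<in>A. f x $$ rc)"

text \<open>Product of commuting operators indexed by a finite set (order taken from an arbitrary
  enumeration; irrelevant when the factors commute).\<close>
definition set_prod :: "nat \<Rightarrow> ('a \<Rightarrow> complex mat) \<Rightarrow> 'a set \<Rightarrow> complex mat" where
  "set_prod d f A = mat_prod_list d (map f (SOME xs. distinct xs \<and> set xs = A))"

definition h_set :: "nat \<Rightarrow> (pauli list \<Rightarrow> real) \<Rightarrow> pauli list set \<Rightarrow> complex mat" where
  "h_set n b S = set_prod (2 ^ n) (hterm b) S"

text \<open>h_C = h_{C_a} h_{C_b} for an even hole C with colour classes C_a, C_b.\<close>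
definition h_hole :: "nat \<Rightarrow> pauli list set \<Rightarrow> (pauli list \<Rightarrow> real) \<Rightarrow> pauli list set \<Rightarrow> complex mat" where
  "h_hole n V b C = (let (Ca, Cb) = (SOME (Ca, Cb). Ca \<union> Cb = C \<and> Ca \<inter> Cb = {} \<and>
        indep V Ca \<and> indep V Cb) in h_set n b Ca * h_set n b Cb)"

definition transfer :: "nat \<Rightarrow> pauli list set \<Rightarrow> (pauli list \<Rightarrow> real) \<Rightarrow> complex \<Rightarrow> complex mat" where
  "transfer n V b u = mat_sum (2 ^ n) (\<lambda>S. ((- u) ^ card S) \<cdot>\<^sub>m h_set n b S) {S. indep V S}"

text \<open>Z_G(-u^2) := T_G(u) T_G(-u).\<close>
definition Zop :: "nat \<Rightarrow> pauli list set \<Rightarrow> (pauli list \<Rightarrow> real) \<Rightarrow> complex \<Rightarrow> complex mat" where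
  "Zop n V b u = transfer n V b u * transfer n V b (- u)"

definition indep_poly :: "pauli list set \<Rightarrow> (pauli list \<Rightarrow> real) \<Rightarrow> pauli list set \<Rightarrow> complex \<Rightarrow> complex" where
  "indep_poly V b W x = (\<Sum>S\<in>{S. S \<subseteq> W \<and> indep V S}.
      x ^ card S * (\<Prod>j\<in>S. complex_of_real ((b j)\<^sup>2)))"

end

theory Submission
  imports Defs
begin

text \<open>Multiplying out T(u) T(-u) gives a sum over pairs (S1, S2) of independent sets. Writing
  K = S1 \<inter> S2, W = (S1 - S2) \<union> (S2 - S1) and W1 = S1 - S2, the pair corresponds to an
  independent set K outside the closed neighbourhood of W together with a proper 2-colouring
  (W1, W - W1) of the subgraph induced by W. The factor h_K occurs twice, commutes with the rest
  and squares to the scalar of the independence polynomial, so the terms with a fixed W add up to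
  a scalar multiple of F(W), the sum of (-1)^|W1| h_W1 h_(W - W1) over the 2-colourings of W.

  F is multiplicative over unions of non-adjacent pieces. An isolated vertex v gives
  F({v}) = h_v - h_v = 0, and a pendant vertex v has its colour forced by its only neighbour,
  giving F(W) = -h_v F(W - v). In a claw-free graph every vertex of a 2-colourable induced subgraph
  has degree at most 2, so after removing a pendant vertex its neighbour is pendant or isolated;
  hence F(W) \<noteq> 0 forces every vertex of W to have degree exactly 2. Then W is a disjoint union
  of pairwise compatible even holes, determined by W, and for one hole C the two
  colourings give F(C) = 2 (-1)^(|C|/2) h_C.\<close>

section \<open>Products of Pauli strings\<close>

lemma sum_lessThan_double:
  "(\<Sum>t<2*m. f t) = (\<Sum>t<m. f (2*t) + f (2*t+1::nat))" for f :: "nat \<Rightarrow> 'a::comm_monoid_add"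
  by (induction m) (auto simp: add.assoc)

lemma double_plus_div_power_Suc_mod_2:
  assumes "x < 2"
  shows "(2*t + x) div 2 ^ Suc k mod 2 = t div 2^k mod (2::nat)"
proof -
  have "(2*t + x) div 2 ^ Suc k = ((2*t + x) div 2) div 2^k" by (simp add: div_mult2_eq)
  also have "(2*t + x) div 2 = t" using assms by simp
  finally show ?thesis by simp
qed

lemma sum_bits_prod:
  "(\<Sum>t<2^n. \<Prod>k<n. g k (t div 2^k mod 2)) = (\<Prod>k<n. g k 0 + g k (1::nat) :: 'a::comm_semiring_1)"
proof (induction n arbitrary: g)
  case 0
  then show ?case by simp
next
  case (Suc n)
  have "(\<Sum>t<2^Suc n. \<Prod>k<Suc n. g k (t div 2^k mod 2))
      = (\<Sum>t<2^n. (\<Prod>k<Suc n. g k ((2*t) div 2^k mod 2)) + (\<Prod>k<Suc n. g k ((2*t+1) div 2^k mod 2)))"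
    by (simp add: sum_lessThan_double)
  also have "\<dots> = (\<Sum>t<2^n. (g 0 0 + g 0 1) * (\<Prod>k<n. g (Suc k) (t div 2^k mod 2)))"
  proof (rule sum.cong[OF refl])
    fix t :: nat
    have "(2*t) div 2 ^ Suc k mod 2 = t div 2^k mod 2" "(2*t+1) div 2 ^ Suc k mod 2 = t div 2^k mod 2" for k
      using double_plus_div_power_Suc_mod_2[of 0 t k] double_plus_div_power_Suc_mod_2[of 1 t k] by simp_all
    then show "(\<Prod>k<Suc n. g k ((2*t) div 2^k mod 2)) + (\<Prod>k<Suc n. g k ((2*t+1) div 2^k mod 2))
       = (g 0 0 + g 0 1) * (\<Prod>k<n. g (Suc k) (t div 2^k mod 2))"
      unfolding prod.lessThan_Suc_shift by (simp add: algebra_simps mod_Suc)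
  qed
  also have "\<dots> = (g 0 0 + g 0 1) * (\<Prod>k<n. g (Suc k) 0 + g (Suc k) 1)"
    using Suc.IH[of "\<lambda>k. g (Suc k)"] by (simp add: sum_distrib_left[symmetric])
  also have "\<dots> = (\<Prod>k<Suc n. g k 0 + g k 1)"
    unfolding prod.lessThan_Suc_shift by simp
  finally show ?case .
qed

lemma eq_if_bits_eq:
  "r < 2^n \<Longrightarrow> c < 2^n \<Longrightarrow> (\<forall>k<n. r div 2^k mod 2 = c div 2^k mod (2::nat)) \<Longrightarrow> r = c"
proof (induction n arbitrary: r c)
  case 0
  then show ?case by simp
next
  case (Suc n)
  have "(r div 2) div 2^k mod 2 = (c div 2) div 2^k mod 2" if "k < n" for k
    using Suc.prems(3) that by (auto simp: div_mult2_eq[symmetric])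
  moreover have "r div 2 < 2^n" "c div 2 < 2^n" using Suc.prems by auto
  ultimately have "r div 2 = c div 2" using Suc.IH by blast
  moreover have "r mod 2 = c mod 2" using Suc.prems(3) by (metis power_0 div_by_1 zero_less_Suc)
  ultimately show ?case by (metis div_mult_mod_eq)
qed

definition qubit_mult_entry :: "pauli \<Rightarrow> pauli \<Rightarrow> nat \<Rightarrow> nat \<Rightarrow> complex" where
  "qubit_mult_entry a a' r c = pauli_entry a r 0 * pauli_entry a' 0 c + pauli_entry a r 1 * pauli_entry a' 1 c"

definition qubit_comm_sign :: "pauli \<Rightarrow> pauli \<Rightarrow> complex" where
  "qubit_comm_sign a a' = (if a = a' \<or> a = PI \<or> a' = PI then 1 else -1)"

definition pauli_comm_sign :: "pauli list \<Rightarrow> pauli list \<Rightarrow> complex" where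
  "pauli_comm_sign p q = (\<Prod>k<length p. qubit_comm_sign (p!k) (q!k))"

lemma qubit_mult_entry_swap:
  "r < 2 \<Longrightarrow> c < 2 \<Longrightarrow> qubit_mult_entry a a' r c = qubit_comm_sign a a' * qubit_mult_entry a' a r c"
  by (cases a; cases a'; cases r; cases c)
     (auto simp: qubit_mult_entry_def qubit_comm_sign_def less_Suc_eq numeral_2_eq_2)

lemma qubit_mult_entry_same: "r < 2 \<Longrightarrow> c < 2 \<Longrightarrow> qubit_mult_entry a a r c = (if r = c then 1 else 0)"
  by (cases a; cases r; cases c) (auto simp: qubit_mult_entry_def less_Suc_eq numeral_2_eq_2)

lemma pauli_mat_carrier: "length p = n \<Longrightarrow> pauli_mat p \<in> carrier_mat (2^n) (2^n)"
  by (auto simp: pauli_mat_def)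

lemma pauli_mat_mult_entry:
  assumes "length p = n" "length q = n" "r < 2^n" "c < 2^n"
  shows "(pauli_mat p * pauli_mat q) $$ (r, c) =
    (\<Prod>k<n. qubit_mult_entry (p!k) (q!k) (r div 2^k mod 2) (c div 2^k mod 2))"
proof -
  have "(pauli_mat p * pauli_mat q) $$ (r, c) =
     (\<Sum>t<2^n. (\<Prod>k<n. pauli_entry (p!k) (r div 2^k mod 2) (t div 2^k mod 2)) *
                (\<Prod>k<n. pauli_entry (q!k) (t div 2^k mod 2) (c div 2^k mod 2)))"
    using assms by (simp add: pauli_mat_def scalar_prod_def lessThan_atLeast0)
  also have "\<dots> = (\<Prod>k<n. qubit_mult_entry (p!k) (q!k) (r div 2^k mod 2) (c div 2^k mod 2))"
    unfolding prod.distrib[symmetric] by (subst sum_bits_prod) (simp add: qubit_mult_entry_def)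
  finally show ?thesis .
qed

lemma pauli_mat_mult_comm_sign:
  assumes "length p = n" "length q = n"
  shows "pauli_mat p * pauli_mat q = pauli_comm_sign p q \<cdot>\<^sub>m (pauli_mat q * pauli_mat p)"
proof (rule eq_matI)
  fix i j assume "i < dim_row (pauli_comm_sign p q \<cdot>\<^sub>m (pauli_mat q * pauli_mat p))"
    "j < dim_col (pauli_comm_sign p q \<cdot>\<^sub>m (pauli_mat q * pauli_mat p))"
  then have i: "i < 2^n" and j: "j < 2^n" using assms by (auto simp: pauli_mat_def)
  have "(pauli_comm_sign p q \<cdot>\<^sub>m (pauli_mat q * pauli_mat p)) $$ (i, j) =
      pauli_comm_sign p q * (pauli_mat q * pauli_mat p) $$ (i, j)"
    using i j assms by (simp add: pauli_mat_def)
  then show "(pauli_mat p * pauli_mat q) $$ (i, j) = (pauli_comm_sign p q \<cdot>\<^sub>m (pauli_mat q * pauli_mat p)) $$ (i, j)"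
    using assms i j
    by (simp add: pauli_mat_mult_entry pauli_comm_sign_def qubit_mult_entry_swap[where a="p!_"]
        prod.distrib[symmetric])
qed (use assms in \<open>auto simp: pauli_mat_def\<close>)

lemma pauli_comm_sign_cases: "pauli_comm_sign p q = 1 \<or> pauli_comm_sign p q = -1"
proof -
  have "(\<Prod>k\<in>A. qubit_comm_sign (p!k) (q!k)) \<in> {1, -1}" if "finite A" for A :: "nat set"
    using that by (induction A rule: finite_induct) (auto simp: qubit_comm_sign_def)
  then show ?thesis unfolding pauli_comm_sign_def by blast
qed

lemma pauli_mat_mult_swap:
  assumes "length p = n" "length q = n"
  shows "pauli_mat p * pauli_mat q =
    (if anticommute (pauli_mat p) (pauli_mat q) then -1 else 1) \<cdot>\<^sub>m (pauli_mat q * pauli_mat p)"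
proof -
  have "- A = (-1) \<cdot>\<^sub>m A" for A :: "complex mat" by (rule eq_matI) auto
  then show ?thesis
    using pauli_mat_mult_comm_sign[OF assms] pauli_comm_sign_cases[of p q]
    unfolding anticommute_def by auto
qed

lemma pauli_mat_square:
  assumes "length p = n"
  shows "pauli_mat p * pauli_mat p = 1\<^sub>m (2^n)"
proof (rule eq_matI)
  fix i j assume "i < dim_row (1\<^sub>m (2^n) :: complex mat)" "j < dim_col (1\<^sub>m (2^n) :: complex mat)"
  then have i: "i < 2^n" and j: "j < 2^n" by auto
  have "(pauli_mat p * pauli_mat p) $$ (i, j) = (\<Prod>k<n. if i div 2^k mod 2 = j div 2^k mod 2 then 1 else 0)"
    using assms i j by (simp add: pauli_mat_mult_entry qubit_mult_entry_same)
  also have "\<dots> = (if i = j then 1 else 0)"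
    using eq_if_bits_eq[OF i j] by auto
  finally show "(pauli_mat p * pauli_mat p) $$ (i, j) = 1\<^sub>m (2 ^ n) $$ (i, j)" using i j by simp
qed (use assms in \<open>auto simp: pauli_mat_def\<close>)

definition pairwise_commuting :: "nat \<Rightarrow> ('a \<Rightarrow> complex mat) \<Rightarrow> 'a set \<Rightarrow> bool" where
  "pairwise_commuting d f A \<longleftrightarrow>
     (\<forall>x\<in>A. f x \<in> carrier_mat d d) \<and> (\<forall>x\<in>A. \<forall>y\<in>A. f x * f y = f y * f x)"

lemma pairwise_commuting_subset: "pairwise_commuting d f A \<Longrightarrow> B \<subseteq> A \<Longrightarrow> pairwise_commuting d f B"
  unfolding pairwise_commuting_def by blast

lemma smult_smult_mat [simp]: "a \<cdot>\<^sub>m (c \<cdot>\<^sub>m A) = (a * c) \<cdot>\<^sub>m (A :: 'a::semigroup_mult mat)"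
  by (rule eq_matI) (auto simp: mult.assoc)

lemma one_smult_mat [simp]: "(1::'a::monoid_mult) \<cdot>\<^sub>m A = A"
  by (rule eq_matI) auto

lemma mat_prod_list_Nil [simp]: "mat_prod_list d [] = 1\<^sub>m d"
  by (simp add: mat_prod_list_def)

lemma mat_prod_list_Cons [simp]: "mat_prod_list d (x # xs) = x * mat_prod_list d xs"
  by (simp add: mat_prod_list_def)

lemma mat_prod_list_carrier:
  "\<forall>x\<in>set xs. x \<in> carrier_mat d d \<Longrightarrow> mat_prod_list d xs \<in> carrier_mat d d"
  by (induction xs) auto

lemma mat_prod_list_append:
  "\<forall>x\<in>set xs. x \<in> carrier_mat d d \<Longrightarrow> \<forall>x\<in>set ys. x \<in> carrier_mat d d \<Longrightarrow>
   mat_prod_list d (xs @ ys) = mat_prod_list d xs * mat_prod_list d ys"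
proof (induction xs)
  case Nil
  then show ?case using mat_prod_list_carrier[of ys d] by simp
next
  case (Cons x xs)
  then have "x \<in> carrier_mat d d" "mat_prod_list d xs \<in> carrier_mat d d" "mat_prod_list d ys \<in> carrier_mat d d"
    using mat_prod_list_carrier[of ys d] mat_prod_list_carrier[of xs d] by auto
  with Cons show ?case by simp
qed

lemma mat_prod_list_commute:
  "M \<in> carrier_mat d d \<Longrightarrow> \<forall>x\<in>set xs. x \<in> carrier_mat d d \<and> M * x = x * M \<Longrightarrow>
   M * mat_prod_list d xs = mat_prod_list d xs * M"
proof (induction xs)
  case Nil
  then show ?case by simp
next
  case (Cons x xs)
  have x: "x \<in> carrier_mat d d" and xs: "mat_prod_list d xs \<in> carrier_mat d d"
    using Cons.prems mat_prod_list_carrier[of xs d] by auto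
  have "M * mat_prod_list d (x # xs) = (M * x) * mat_prod_list d xs"
    by (simp only: mat_prod_list_Cons assoc_mult_mat[OF Cons.prems(1) x xs])
  also have "\<dots> = (x * M) * mat_prod_list d xs" using Cons.prems by simp
  also have "\<dots> = x * (M * mat_prod_list d xs)" using Cons.prems x xs by simp
  also have "\<dots> = x * (mat_prod_list d xs * M)" using Cons by simp
  also have "\<dots> = mat_prod_list d (x # xs) * M"
    by (simp only: mat_prod_list_Cons assoc_mult_mat[OF x xs Cons.prems(1)])
  finally show ?case .
qed

lemma mat_prod_list_perm:
  assumes "distinct xs" "distinct ys" "set xs = set ys" "pairwise_commuting d f (set xs)"
  shows "mat_prod_list d (map f xs) = mat_prod_list d (map f ys)"
  using assms
proof (induction xs arbitrary: ys)
  case Nil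
  then show ?case by simp
next
  case (Cons x xs)
  from Cons.prems have "x \<in> set ys" by auto
  then obtain ys1 ys2 where ys: "ys = ys1 @ x # ys2" by (meson split_list)
  let ?P1 = "mat_prod_list d (map f ys1)" and ?P2 = "mat_prod_list d (map f ys2)"
  have c: "\<forall>z\<in>set ys. f z \<in> carrier_mat d d" using Cons.prems unfolding pairwise_commuting_def by auto
  then have fx: "f x \<in> carrier_mat d d" and P1: "?P1 \<in> carrier_mat d d" and P2: "?P2 \<in> carrier_mat d d"
    using ys by (auto intro!: mat_prod_list_carrier)
  have "\<forall>z\<in>set (map f ys1). z \<in> carrier_mat d d \<and> f x * z = z * f x"
  proof
    fix z assume "z \<in> set (map f ys1)"
    then obtain y where y: "y \<in> set ys1" "z = f y" by auto
    then have "y \<in> set (x # xs)" using Cons.prems(3) ys by auto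
    then show "z \<in> carrier_mat d d \<and> f x * z = z * f x"
      using Cons.prems(4) y unfolding pairwise_commuting_def by (meson list.set_intros(1))
  qed
  then have comm: "f x * ?P1 = ?P1 * f x"
    using fx by (intro mat_prod_list_commute)
  have "mat_prod_list d (map f ys) = ?P1 * (f x * ?P2)"
    using c ys by (simp add: mat_prod_list_append)
  also have "\<dots> = f x * (?P1 * ?P2)"
    by (simp only: assoc_mult_mat[OF P1 fx P2, symmetric] comm[symmetric] assoc_mult_mat[OF fx P1 P2])
  also have "?P1 * ?P2 = mat_prod_list d (map f (ys1 @ ys2))"
    using c ys by (simp add: mat_prod_list_append)
  also have "\<dots> = mat_prod_list d (map f xs)"
    using Cons.prems ys by (intro Cons.IH[symmetric]) (auto intro: pairwise_commuting_subset)
  finally show ?case by simp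
qed

lemma set_prod_eq_mat_prod_list:
  assumes "distinct xs" "set xs = A" "pairwise_commuting d f A"
  shows "set_prod d f A = mat_prod_list d (map f xs)"
proof -
  have ex: "\<exists>ys. distinct ys \<and> set ys = A" using assms by blast
  have "distinct (SOME ys. distinct ys \<and> set ys = A) \<and> set (SOME ys. distinct ys \<and> set ys = A) = A"
    by (rule someI_ex[OF ex])
  then show ?thesis unfolding set_prod_def using assms by (intro mat_prod_list_perm) auto
qed

lemma set_prod_carrier:
  assumes "finite A" "\<forall>x\<in>A. f x \<in> carrier_mat d d"
  shows "set_prod d f A \<in> carrier_mat d d"
proof -
  have ex: "\<exists>ys. distinct ys \<and> set ys = A" using finite_distinct_list[OF assms(1)] by blast
  have "distinct (SOME ys. distinct ys \<and> set ys = A) \<and> set (SOME ys. distinct ys \<and> set ys = A) = A"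
    by (rule someI_ex[OF ex])
  then show ?thesis unfolding set_prod_def using assms by (intro mat_prod_list_carrier) auto
qed

lemma set_prod_empty [simp]: "set_prod d f {} = 1\<^sub>m d"
  using set_prod_eq_mat_prod_list[of "[]" "{}" d f] by (simp add: pairwise_commuting_def)

lemma set_prod_insert:
  assumes "finite A" "x \<notin> A" "pairwise_commuting d f (insert x A)"
  shows "set_prod d f (insert x A) = f x * set_prod d f A"
proof -
  obtain xs where xs: "distinct xs" "set xs = A" using finite_distinct_list[OF assms(1)] by blast
  have "set_prod d f (insert x A) = mat_prod_list d (map f (x # xs))"
    using xs assms by (intro set_prod_eq_mat_prod_list) auto
  moreover have "set_prod d f A = mat_prod_list d (map f xs)"
    using xs assms by (intro set_prod_eq_mat_prod_list) (auto intro: pairwise_commuting_subset)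
  ultimately show ?thesis by simp
qed

lemma set_prod_commute:
  assumes "finite A" "pairwise_commuting d f A" "M \<in> carrier_mat d d" "\<forall>x\<in>A. M * f x = f x * M"
  shows "M * set_prod d f A = set_prod d f A * M"
proof -
  obtain xs where xs: "distinct xs" "set xs = A" using finite_distinct_list[OF assms(1)] by blast
  show ?thesis using set_prod_eq_mat_prod_list[OF xs assms(2)] assms xs
    unfolding pairwise_commuting_def by (simp add: mat_prod_list_commute)
qed

lemma set_prod_Un:
  assumes "finite A" "finite B" "A \<inter> B = {}" "pairwise_commuting d f (A \<union> B)"
  shows "set_prod d f (A \<union> B) = set_prod d f A * set_prod d f B"
proof -
  obtain xs ys where xs: "distinct xs" "set xs = A" and ys: "distinct ys" "set ys = B"
    using finite_distinct_list assms(1,2) by metis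
  have "set_prod d f (A \<union> B) = mat_prod_list d (map f (xs @ ys))"
    using xs ys assms by (intro set_prod_eq_mat_prod_list) auto
  also have "\<dots> = mat_prod_list d (map f xs) * mat_prod_list d (map f ys)"
    using assms xs ys unfolding pairwise_commuting_def map_append by (intro mat_prod_list_append) auto
  also have "\<dots> = set_prod d f A * set_prod d f B"
    using xs ys assms by (simp add: set_prod_eq_mat_prod_list pairwise_commuting_subset)
  finally show ?thesis .
qed

lemma mat_sum_carrier [simp]: "mat_sum d f A \<in> carrier_mat d d"
  by (simp add: mat_sum_def)

lemma mat_sum_dim [simp]: "dim_row (mat_sum d f A) = d" "dim_col (mat_sum d f A) = d"
  by (simp_all add: mat_sum_def)

lemma mat_sum_index: "i < d \<Longrightarrow> j < d \<Longrightarrow> mat_sum d f A $$ (i, j) = (\<Sum>x\<in>A. f x $$ (i, j))"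
  by (simp add: mat_sum_def)

lemma mat_sum_empty [simp]: "mat_sum d f {} = 0\<^sub>m d d"
  by (rule eq_matI) (auto simp: mat_sum_index)

lemma mat_sum_singleton: "f a \<in> carrier_mat d d \<Longrightarrow> mat_sum d f {a} = f a"
  by (rule eq_matI) (auto simp: mat_sum_index)

lemma mat_sum_doubleton: "a \<noteq> c \<Longrightarrow> mat_sum d f {a, c} = mat d d (\<lambda>ij. f a $$ ij + f c $$ ij)"
  by (simp add: mat_sum_def)

lemma mat_sum_cong: "A = B \<Longrightarrow> (\<And>x. x \<in> B \<Longrightarrow> f x = g x) \<Longrightarrow> mat_sum d f A = mat_sum d g B"
  unfolding mat_sum_def by (auto intro!: sum.cong)

lemma mat_sum_reindex_bij_betw: "bij_betw g A B \<Longrightarrow> mat_sum d (\<lambda>x. f (g x)) A = mat_sum d f B"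
  unfolding mat_sum_def by (rule cong[of "mat d d"], simp) (auto simp: sum.reindex_bij_betw[symmetric])

lemma mat_sum_Sigma:
  assumes "finite A" "\<forall>x\<in>A. finite (B x)"
  shows "mat_sum d (\<lambda>p. f (fst p) (snd p)) (Sigma A B) = mat_sum d (\<lambda>x. mat_sum d (f x) (B x)) A"
proof (rule eq_matI)
  fix i j assume "i < dim_row (mat_sum d (\<lambda>x. mat_sum d (f x) (B x)) A)"
    "j < dim_col (mat_sum d (\<lambda>x. mat_sum d (f x) (B x)) A)"
  moreover have "(\<Sum>x\<in>A. \<Sum>y\<in>B x. f x y $$ (i, j)) = (\<Sum>(x, y)\<in>Sigma A B. f x y $$ (i, j))"
    using assms by (intro sum.Sigma) auto
  ultimately show "mat_sum d (\<lambda>p. f (fst p) (snd p)) (Sigma A B) $$ (i, j) =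
      mat_sum d (\<lambda>x. mat_sum d (f x) (B x)) A $$ (i, j)"
    by (simp add: mat_sum_index split_beta)
qed auto

lemma mat_sum_mono_neutral:
  assumes "finite B" "A \<subseteq> B" "\<forall>x\<in>B - A. f x = 0\<^sub>m d d"
  shows "mat_sum d f B = mat_sum d f A"
proof (rule eq_matI)
  fix i j assume "i < dim_row (mat_sum d f A)" "j < dim_col (mat_sum d f A)"
  then show "mat_sum d f B $$ (i, j) = mat_sum d f A $$ (i, j)"
    using assms by (simp add: mat_sum_index) (rule sum.mono_neutral_right, auto)
qed auto

lemma smult_mat_sum:
  "\<forall>x\<in>A. f x \<in> carrier_mat d d \<Longrightarrow> c \<cdot>\<^sub>m mat_sum d f A = mat_sum d (\<lambda>x. c \<cdot>\<^sub>m f x) A"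
  by (rule eq_matI) (auto simp: mat_sum_index sum_distrib_left intro!: sum.cong)

lemma mat_sum_smult_const:
  "M \<in> carrier_mat d d \<Longrightarrow> mat_sum d (\<lambda>x. a x \<cdot>\<^sub>m M) A = (\<Sum>x\<in>A. a x) \<cdot>\<^sub>m M"
  by (rule eq_matI) (auto simp: mat_sum_index sum_distrib_right)

lemma mult_mat_sum_left:
  assumes "M \<in> carrier_mat d d" "\<forall>x\<in>A. f x \<in> carrier_mat d d"
  shows "M * mat_sum d f A = mat_sum d (\<lambda>x. M * f x) A"
proof (rule eq_matI)
  fix i j assume "i < dim_row (mat_sum d (\<lambda>x. M * f x) A)" "j < dim_col (mat_sum d (\<lambda>x. M * f x) A)"
  then have i: "i < d" and j: "j < d" by auto
  have "(M * mat_sum d f A) $$ (i, j) = (\<Sum>k<d. M $$ (i, k) * (\<Sum>x\<in>A. f x $$ (k, j)))"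
    using assms i j by (simp add: scalar_prod_def mat_sum_index lessThan_atLeast0)
  also have "\<dots> = (\<Sum>x\<in>A. \<Sum>k<d. M $$ (i, k) * f x $$ (k, j))"
    by (simp add: sum_distrib_left sum.swap[of _ A])
  also have "\<dots> = (\<Sum>x\<in>A. (M * f x) $$ (i, j))"
    using assms i j by (intro sum.cong) (auto simp: scalar_prod_def lessThan_atLeast0)
  finally show "(M * mat_sum d f A) $$ (i, j) = mat_sum d (\<lambda>x. M * f x) A $$ (i, j)"
    using i j by (simp add: mat_sum_index)
qed (use assms in auto)

lemma mat_sum_mult:
  assumes "finite A" "finite B" "\<forall>x\<in>A. f x \<in> carrier_mat d d" "\<forall>y\<in>B. g y \<in> carrier_mat d d"
  shows "mat_sum d f A * mat_sum d g B = mat_sum d (\<lambda>p. f (fst p) * g (snd p)) (A \<times> B)"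
proof (rule eq_matI)
  fix i j assume "i < dim_row (mat_sum d (\<lambda>p. f (fst p) * g (snd p)) (A \<times> B))"
    "j < dim_col (mat_sum d (\<lambda>p. f (fst p) * g (snd p)) (A \<times> B))"
  then have i: "i < d" and j: "j < d" by auto
  have "(mat_sum d f A * mat_sum d g B) $$ (i, j) = (\<Sum>k<d. (\<Sum>x\<in>A. f x $$ (i, k)) * (\<Sum>y\<in>B. g y $$ (k, j)))"
    using i j by (simp add: scalar_prod_def mat_sum_index lessThan_atLeast0)
  also have "\<dots> = (\<Sum>k<d. \<Sum>p\<in>A \<times> B. f (fst p) $$ (i, k) * g (snd p) $$ (k, j))"
  proof (rule sum.cong[OF refl])
    fix k
    have "(\<Sum>x\<in>A. f x $$ (i, k)) * (\<Sum>y\<in>B. g y $$ (k, j)) = (\<Sum>(x, y)\<in>A \<times> B. f x $$ (i, k) * g y $$ (k, j))"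
      by (simp only: sum_product sum.cartesian_product)
    then show "(\<Sum>x\<in>A. f x $$ (i, k)) * (\<Sum>y\<in>B. g y $$ (k, j)) =
        (\<Sum>p\<in>A \<times> B. f (fst p) $$ (i, k) * g (snd p) $$ (k, j))"
      by (simp add: split_beta)
  qed
  also have "\<dots> = (\<Sum>p\<in>A \<times> B. \<Sum>k<d. f (fst p) $$ (i, k) * g (snd p) $$ (k, j))"
    by (rule sum.swap)
  also have "\<dots> = (\<Sum>p\<in>A \<times> B. (f (fst p) * g (snd p)) $$ (i, j))"
  proof (rule sum.cong[OF refl])
    fix p assume "p \<in> A \<times> B"
    then have "f (fst p) \<in> carrier_mat d d" "g (snd p) \<in> carrier_mat d d" using assms by auto
    then show "(\<Sum>k<d. f (fst p) $$ (i, k) * g (snd p) $$ (k, j)) = (f (fst p) * g (snd p)) $$ (i, j)"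
      using i j by (simp add: scalar_prod_def lessThan_atLeast0)
  qed
  finally show "(mat_sum d f A * mat_sum d g B) $$ (i, j) = mat_sum d (\<lambda>p. f (fst p) * g (snd p)) (A \<times> B) $$ (i, j)"
    using i j by (simp add: mat_sum_index)
qed auto

lemma fadj_in_V: "fadj V j k \<Longrightarrow> j \<in> V \<and> k \<in> V \<and> j \<noteq> k"
  by (simp add: fadj_def)

lemma fadj_irrefl [simp]: "\<not> fadj V j j"
  by (simp add: fadj_def)

lemma fadj_sym: "fadj V j k = fadj V k j"
proof -
  have "anticommute A B \<Longrightarrow> anticommute B A" for A B :: "complex mat"
    unfolding anticommute_def by (metis uminus_uminus_mat)
  then show ?thesis unfolding fadj_def by blast
qed

lemma indep_empty [simp]: "indep V {}"
  by (simp add: indep_def)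

lemma indep_subset: "indep V S \<Longrightarrow> T \<subseteq> S \<Longrightarrow> indep V T"
  unfolding indep_def by blast

lemma indep_insert: "indep V (insert v S) \<longleftrightarrow> v \<in> V \<and> indep V S \<and> (\<forall>y\<in>S. \<not> fadj V v y)"
  unfolding indep_def using fadj_sym by auto

lemma indep_Un:
  "indep V S \<Longrightarrow> indep V T \<Longrightarrow> \<forall>x\<in>S. \<forall>y\<in>T. \<not> fadj V x y \<Longrightarrow> indep V (S \<union> T)"
  unfolding indep_def using fadj_sym by blast

locale pauli_hamiltonian =
  fixes n :: nat and V :: "pauli list set" and b :: "pauli list \<Rightarrow> real"
  assumes finite_V: "finite V" and length_V: "\<forall>j\<in>V. length j = n"
begin

abbreviation ops :: "complex mat set" where
  "ops \<equiv> carrier_mat (2^n) (2^n)"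

text \<open>The carrier-guarded matrix laws with the dimension fixed, so that the simplifier can
  discharge their side conditions.\<close>

lemma ops_mult_closed [simp]: "A \<in> ops \<Longrightarrow> B \<in> ops \<Longrightarrow> A * B \<in> ops"
  by simp

lemma ops_mult_assoc [simp]: "A \<in> ops \<Longrightarrow> B \<in> ops \<Longrightarrow> C \<in> ops \<Longrightarrow> (A * B) * C = A * (B * C)"
  by (rule assoc_mult_mat)

lemma ops_smult_mult [simp]: "A \<in> ops \<Longrightarrow> B \<in> ops \<Longrightarrow> (k \<cdot>\<^sub>m A) * B = k \<cdot>\<^sub>m (A * B)"
  by (rule mult_smult_assoc_mat)

lemma ops_mult_smult [simp]: "A \<in> ops \<Longrightarrow> B \<in> ops \<Longrightarrow> A * (k \<cdot>\<^sub>m B) = k \<cdot>\<^sub>m (A * B)"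
  by (rule mult_smult_distrib)

lemma ops_zero_mult [simp]: "A \<in> ops \<Longrightarrow> 0\<^sub>m (2^n) (2^n) * A = 0\<^sub>m (2^n) (2^n)"
  by (rule left_mult_zero_mat)

lemma ops_mult_one [simp]: "A \<in> ops \<Longrightarrow> A * 1\<^sub>m (2^n) = A"
  by (rule right_mult_one_mat)

lemma ops_one_mult [simp]: "A \<in> ops \<Longrightarrow> 1\<^sub>m (2^n) * A = A"
  by (rule left_mult_one_mat)

lemma ops_mult_left_commute:
  "A \<in> ops \<Longrightarrow> B \<in> ops \<Longrightarrow> C \<in> ops \<Longrightarrow> A * B = B * A \<Longrightarrow> A * (B * C) = B * (A * C)"
  by (metis assoc_mult_mat)

lemma hterm_carrier [simp]: "j \<in> V \<Longrightarrow> hterm b j \<in> ops"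
  unfolding hterm_def using length_V pauli_mat_carrier by auto

lemma hterm_mult_swap:
  assumes "j \<in> V" "k \<in> V"
  shows "hterm b j * hterm b k = (if fadj V j k then -1 else 1) \<cdot>\<^sub>m (hterm b k * hterm b j)"
proof (cases "j = k")
  case False
  have P: "pauli_mat j \<in> ops" "pauli_mat k \<in> ops" using assms length_V pauli_mat_carrier by auto
  have "fadj V j k \<longleftrightarrow> anticommute (pauli_mat j) (pauli_mat k)"
    using assms False by (simp add: fadj_def)
  then show ?thesis
    using pauli_mat_mult_swap[of j n k] assms length_V P
    unfolding hterm_def by (simp add: ac_simps)
qed simp

lemma hterm_commute: "j \<in> V \<Longrightarrow> k \<in> V \<Longrightarrow> \<not> fadj V j k \<Longrightarrow> hterm b j * hterm b k = hterm b k * hterm b j"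
  using hterm_mult_swap[of j k] by simp

lemma hterm_square: "j \<in> V \<Longrightarrow> hterm b j * hterm b j = complex_of_real ((b j)\<^sup>2) \<cdot>\<^sub>m 1\<^sub>m (2^n)"
  using length_V pauli_mat_carrier[of j n]
  by (simp add: hterm_def pauli_mat_square power2_eq_square)

lemma hterm_mat_prod_list_swap:
  "j \<in> V \<Longrightarrow> set ys \<subseteq> V \<Longrightarrow>
   hterm b j * mat_prod_list (2^n) (map (hterm b) ys) =
   ((-1) ^ length (filter (fadj V j) ys)) \<cdot>\<^sub>m (mat_prod_list (2^n) (map (hterm b) ys) * hterm b j)"
proof (induction ys)
  case Nil
  then show ?case by simp
next
  case (Cons y ys)
  let ?P = "mat_prod_list (2^n) (map (hterm b) ys)"
  let ?s = "(if fadj V j y then -1 else 1) :: complex"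
  have P: "?P \<in> ops" using Cons.prems by (intro mat_prod_list_carrier) auto
  have hj: "hterm b j \<in> ops" and hy: "hterm b y \<in> ops" using Cons.prems by auto
  have "hterm b j * mat_prod_list (2^n) (map (hterm b) (y # ys)) = (hterm b j * hterm b y) * ?P"
    using P hj hy by simp
  also have "\<dots> = (?s \<cdot>\<^sub>m (hterm b y * hterm b j)) * ?P"
    using Cons.prems hterm_mult_swap[of j y] by simp
  also have "\<dots> = ?s \<cdot>\<^sub>m (hterm b y * (hterm b j * ?P))"
    using P hj hy by simp
  also have "\<dots> = (?s * (-1) ^ length (filter (fadj V j) ys)) \<cdot>\<^sub>m (hterm b y * ?P * hterm b j)"
    using Cons P hj hy by simp
  finally show ?case by simp
qed

lemma indep_finite: "indep V S \<Longrightarrow> finite S"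
  unfolding indep_def using finite_V finite_subset by blast

lemma pairwise_commuting_hterm: "indep V S \<Longrightarrow> pairwise_commuting (2^n) (hterm b) S"
  unfolding pairwise_commuting_def indep_def by (auto intro!: hterm_commute)

lemma h_set_carrier [simp]: "S \<subseteq> V \<Longrightarrow> h_set n b S \<in> ops"
  unfolding h_set_def using finite_V finite_subset by (intro set_prod_carrier) auto

lemma h_set_empty [simp]: "h_set n b {} = 1\<^sub>m (2^n)"
  by (simp add: h_set_def)

lemma h_set_Un:
  "indep V (S \<union> T) \<Longrightarrow> S \<inter> T = {} \<Longrightarrow> h_set n b (S \<union> T) = h_set n b S * h_set n b T"
  unfolding h_set_def using indep_finite indep_subset pairwise_commuting_hterm
  by (intro set_prod_Un) auto

lemma h_set_insert:
  "indep V (insert x S) \<Longrightarrow> x \<notin> S \<Longrightarrow> h_set n b (insert x S) = hterm b x * h_set n b S"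
  unfolding h_set_def using indep_finite indep_subset pairwise_commuting_hterm
  by (intro set_prod_insert) auto

lemma h_set_singleton: "x \<in> V \<Longrightarrow> h_set n b {x} = hterm b x"
  using h_set_insert[of x "{}"] by (simp add: indep_def)

lemma hterm_h_set_swap:
  assumes "j \<in> V" "indep V S"
  shows "hterm b j * h_set n b S = ((-1) ^ card {y\<in>S. fadj V j y}) \<cdot>\<^sub>m (h_set n b S * hterm b j)"
proof -
  obtain xs where xs: "distinct xs" "set xs = S"
    using indep_finite[OF assms(2)] finite_distinct_list by blast
  have "h_set n b S = mat_prod_list (2^n) (map (hterm b) xs)"
    unfolding h_set_def using xs pairwise_commuting_hterm[OF assms(2)] by (rule set_prod_eq_mat_prod_list)
  moreover have "length (filter (fadj V j) xs) = card {y\<in>S. fadj V j y}"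
    using xs by (simp add: distinct_length_filter Collect_conj_eq Int_commute)
  ultimately show ?thesis using hterm_mat_prod_list_swap[OF assms(1)] xs assms(2)
    unfolding indep_def by auto
qed

lemma hterm_h_set_commute:
  "j \<in> V \<Longrightarrow> indep V S \<Longrightarrow> \<forall>y\<in>S. \<not> fadj V j y \<Longrightarrow> hterm b j * h_set n b S = h_set n b S * hterm b j"
proof -
  assume "j \<in> V" "indep V S" "\<forall>y\<in>S. \<not> fadj V j y"
  moreover from this have "card {y\<in>S. fadj V j y} = 0" by (metis (mono_tags) card.empty empty_Collect_eq)
  ultimately show ?thesis using hterm_h_set_swap[of j S] by (simp only: power_0 one_smult_mat)
qed

lemma h_set_commute:
  assumes "indep V S" "indep V T" "\<forall>x\<in>S. \<forall>y\<in>T. \<not> fadj V x y"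
  shows "h_set n b S * h_set n b T = h_set n b T * h_set n b S"
proof -
  have "\<forall>y\<in>T. h_set n b S * hterm b y = hterm b y * h_set n b S"
    using assms hterm_h_set_commute fadj_sym unfolding indep_def by (metis subsetD)
  then show ?thesis unfolding h_set_def[of n b T]
    using assms indep_finite pairwise_commuting_hterm unfolding indep_def
    by (intro set_prod_commute) (auto simp: h_set_def[symmetric])
qed

lemma h_set_square:
  "indep V S \<Longrightarrow> h_set n b S * h_set n b S = (\<Prod>j\<in>S. complex_of_real ((b j)\<^sup>2)) \<cdot>\<^sub>m 1\<^sub>m (2^n)"
proof (induction S rule: infinite_finite_induct)
  case (infinite S)
  then show ?case using indep_finite by blast
next
  case empty
  then show ?case by simp
next
  case (insert x S)
  have x: "x \<in> V" and S: "indep V S" "S \<subseteq> V" and nadj: "\<forall>y\<in>S. \<not> fadj V x y"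
    using insert.prems unfolding indep_insert indep_def by auto
  have "h_set n b (insert x S) * h_set n b (insert x S) = (hterm b x * h_set n b S) * (hterm b x * h_set n b S)"
    using insert by (simp add: h_set_insert)
  also have "\<dots> = hterm b x * ((h_set n b S * hterm b x) * h_set n b S)"
    using x S by simp
  also have "\<dots> = hterm b x * ((hterm b x * h_set n b S) * h_set n b S)"
    by (simp only: hterm_h_set_commute[OF x S(1) nadj])
  also have "\<dots> = (hterm b x * hterm b x) * (h_set n b S * h_set n b S)"
    using x S by simp
  finally show ?case using insert x S by (simp add: hterm_square mult.commute)
qed

end

section \<open>Signed sums over the proper 2-colourings of an induced subgraph\<close>

definition two_colourings :: "pauli list set \<Rightarrow> pauli list set \<Rightarrow> pauli list set set" where
  "two_colourings V W = {W1. W1 \<subseteq> W \<and> indep V W1 \<and> indep V (W - W1)}"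

lemma two_colourings_finite: "finite W \<Longrightarrow> finite (two_colourings V W)"
  unfolding two_colourings_def by (rule finite_subset[of _ "Pow W"]) auto

lemma two_colourings_empty: "two_colourings V {} = {{}}"
  unfolding two_colourings_def by auto

lemma two_colourings_fadj:
  "W1 \<in> two_colourings V W \<Longrightarrow> x \<in> W \<Longrightarrow> y \<in> W \<Longrightarrow> fadj V x y \<Longrightarrow> x \<in> W1 \<longleftrightarrow> y \<notin> W1"
  unfolding two_colourings_def indep_def by blast

lemma two_colourings_Un_bij:
  assumes "A \<inter> B = {}" "\<forall>x\<in>A. \<forall>y\<in>B. \<not> fadj V x y"
  shows "bij_betw (\<lambda>p. fst p \<union> snd p) (two_colourings V A \<times> two_colourings V B) (two_colourings V (A \<union> B))"
proof (rule bij_betw_byWitness[where f'="\<lambda>W1. (W1 \<inter> A, W1 \<inter> B)"])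
  show "\<forall>p\<in>two_colourings V A \<times> two_colourings V B. ((fst p \<union> snd p) \<inter> A, (fst p \<union> snd p) \<inter> B) = p"
    using assms(1) unfolding two_colourings_def by auto
  show "\<forall>W1\<in>two_colourings V (A \<union> B). fst (W1 \<inter> A, W1 \<inter> B) \<union> snd (W1 \<inter> A, W1 \<inter> B) = W1"
    unfolding two_colourings_def by auto
  show "(\<lambda>p. fst p \<union> snd p) ` (two_colourings V A \<times> two_colourings V B) \<subseteq> two_colourings V (A \<union> B)"
  proof clarify
    fix A1 B1 assume a: "A1 \<in> two_colourings V A" "B1 \<in> two_colourings V B"
    have "(A \<union> B) - (A1 \<union> B1) = (A - A1) \<union> (B - B1)" using assms(1) a by (auto simp: two_colourings_def)
    moreover have "indep V (A1 \<union> B1)" "indep V ((A - A1) \<union> (B - B1))"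
      using a assms(2) by (auto intro!: indep_Un simp: two_colourings_def)
    ultimately show "fst (A1, B1) \<union> snd (A1, B1) \<in> two_colourings V (A \<union> B)"
      using a by (auto simp: two_colourings_def)
  qed
  show "(\<lambda>W1. (W1 \<inter> A, W1 \<inter> B)) ` two_colourings V (A \<union> B) \<subseteq> two_colourings V A \<times> two_colourings V B"
  proof (rule image_subsetI)
    fix W1 assume "W1 \<in> two_colourings V (A \<union> B)"
    moreover have "A - W1 \<inter> A \<subseteq> (A \<union> B) - W1" "B - W1 \<inter> B \<subseteq> (A \<union> B) - W1" by auto
    ultimately show "(W1 \<inter> A, W1 \<inter> B) \<in> two_colourings V A \<times> two_colourings V B"
      unfolding two_colourings_def by (auto intro: indep_subset)
  qed
qed

lemma insert_pendant_two_colourings: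
  assumes "v \<in> W" "v \<in> V" "\<forall>y\<in>W. fadj V v y \<longrightarrow> y = w" "W1 \<in> two_colourings V (W - {v})"
  shows "(if w \<in> W1 then W1 else insert v W1) \<in> two_colourings V W"
proof (cases "w \<in> W1")
  case True
  have "W - W1 = insert v ((W - {v}) - W1)" using assms(1,4) unfolding two_colourings_def by auto
  moreover have "indep V (insert v ((W - {v}) - W1))"
    unfolding indep_insert using assms(2-4) True by (auto simp: two_colourings_def)
  ultimately show ?thesis using True assms(4) unfolding two_colourings_def by auto
next
  case False
  have "W - insert v W1 = (W - {v}) - W1" by auto
  moreover have "indep V (insert v W1)"
    unfolding indep_insert using assms(2-4) False by (auto simp: two_colourings_def)
  ultimately show ?thesis using False assms(1,4) unfolding two_colourings_def by auto
qed

lemma two_colourings_insert_pendant_bij: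
  assumes "W \<subseteq> V" "v \<in> W" "{y\<in>W. fadj V v y} = {w}"
  shows "bij_betw (\<lambda>W1. if w \<in> W1 then W1 else insert v W1)
    (two_colourings V (W - {v})) (two_colourings V W)"
proof (rule bij_betw_byWitness[where f'="\<lambda>W1. W1 - {v}"])
  have "w \<in> {y\<in>W. fadj V v y}" using assms(3) by simp
  then have w: "w \<in> W" "fadj V v w" "w \<noteq> v" by auto
  have only_w: "\<forall>y\<in>W. fadj V v y \<longrightarrow> y = w"
  proof (intro ballI impI)
    fix y assume "y \<in> W" "fadj V v y"
    then have "y \<in> {y\<in>W. fadj V v y}" by simp
    then show "y = w" using assms(3) by simp
  qed
  show "\<forall>W1\<in>two_colourings V (W - {v}). (if w \<in> W1 then W1 else insert v W1) - {v} = W1"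
    unfolding two_colourings_def by auto
  show "\<forall>W1\<in>two_colourings V W. (if w \<in> W1 - {v} then W1 - {v} else insert v (W1 - {v})) = W1"
  proof
    fix W1 assume "W1 \<in> two_colourings V W"
    then have "v \<in> W1 \<longleftrightarrow> w \<notin> W1" using two_colourings_fadj assms(2) w by blast
    then show "(if w \<in> W1 - {v} then W1 - {v} else insert v (W1 - {v})) = W1" using w by auto
  qed
  show "(\<lambda>W1. if w \<in> W1 then W1 else insert v W1) ` two_colourings V (W - {v}) \<subseteq> two_colourings V W"
    using insert_pendant_two_colourings[OF assms(2) _ only_w] assms(1,2) by blast
  show "(\<lambda>W1. W1 - {v}) ` two_colourings V W \<subseteq> two_colourings V (W - {v})"
  proof clarify
    fix W1 assume "W1 \<in> two_colourings V W"
    moreover have "(W - {v}) - (W1 - {v}) \<subseteq> W - W1" by auto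
    ultimately show "W1 - {v} \<in> two_colourings V (W - {v})"
      unfolding two_colourings_def by (auto intro: indep_subset)
  qed
qed

lemma degree_le_2_if_two_colourable:
  assumes "claw_free V" "W1 \<in> two_colourings V W" "x \<in> W"
  shows "card {y\<in>W. fadj V x y} \<le> 2"
proof (rule ccontr)
  assume "\<not> ?thesis"
  then have "3 \<le> card {y\<in>W. fadj V x y}" by simp
  then obtain T where T: "T \<subseteq> {y\<in>W. fadj V x y}" "card T = 3" by (meson obtain_subset_with_card_n)
  then obtain a c e where ace: "T = {a, c, e}" "a \<noteq> c" "c \<noteq> e" "a \<noteq> e" by (auto simp: card_3_iff)
  \<comment> \<open>all three neighbours of x get the colour opposite to that of x\<close>
  define S where "S = (if x \<in> W1 then W - W1 else W1)"
  have "indep V S" using assms(2) unfolding S_def two_colourings_def by auto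
  moreover have "y \<in> S" if "y \<in> T" for y
    using two_colourings_fadj[OF assms(2) assms(3)] T that unfolding S_def two_colourings_def by auto
  ultimately have "\<not> fadj V a c" "\<not> fadj V a e" "\<not> fadj V c e" using ace unfolding indep_def by auto
  moreover have "fadj V x a" "fadj V x c" "fadj V x e" using T ace by auto
  ultimately show False using assms(1) ace unfolding claw_free_def by auto
qed

context pauli_hamiltonian
begin

definition colouring_term :: "pauli list set \<Rightarrow> pauli list set \<Rightarrow> complex mat" where
  "colouring_term W W1 = ((-1) ^ card W1) \<cdot>\<^sub>m (h_set n b W1 * h_set n b (W - W1))"

definition colouring_sum :: "pauli list set \<Rightarrow> complex mat" where
  "colouring_sum W = mat_sum (2^n) (colouring_term W) (two_colourings V W)"

lemma colouring_term_carrier: "W \<subseteq> V \<Longrightarrow> W1 \<in> two_colourings V W \<Longrightarrow> colouring_term W W1 \<in> ops"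
  unfolding colouring_term_def two_colourings_def indep_def by auto

lemma colouring_sum_carrier [simp]: "colouring_sum W \<in> ops"
  unfolding colouring_sum_def by simp

lemma colouring_sum_empty: "colouring_sum {} = 1\<^sub>m (2^n)"
  by (simp add: colouring_sum_def colouring_term_def two_colourings_empty mat_sum_singleton)

lemma colouring_term_Un:
  assumes "A \<inter> B = {}" "\<forall>x\<in>A. \<forall>y\<in>B. \<not> fadj V x y"
    and A1: "A1 \<in> two_colourings V A" and B1: "B1 \<in> two_colourings V B"
  shows "colouring_term (A \<union> B) (A1 \<union> B1) = colouring_term A A1 * colouring_term B B1"
proof -
  have i: "indep V A1" "indep V B1" "indep V (A - A1)" "indep V (B - B1)"
    using A1 B1 by (auto simp: two_colourings_def)
  then have sub: "A1 \<subseteq> V" "B1 \<subseteq> V" "A - A1 \<subseteq> V" "B - B1 \<subseteq> V" by (auto simp: indep_def)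
  have nadj: "\<forall>x\<in>A1. \<forall>y\<in>B1. \<not> fadj V x y" "\<forall>x\<in>A - A1. \<forall>y\<in>B - B1. \<not> fadj V x y"
    "\<forall>x\<in>B1. \<forall>y\<in>A - A1. \<not> fadj V x y"
    using assms A1 B1 fadj_sym by (fastforce simp: two_colourings_def)+
  have dis: "A1 \<inter> B1 = {}" "(A - A1) \<inter> (B - B1) = {}"
    using assms(1) A1 B1 by (auto simp: two_colourings_def)
  have "(A \<union> B) - (A1 \<union> B1) = (A - A1) \<union> (B - B1)"
    using assms(1) A1 B1 by (auto simp: two_colourings_def)
  moreover have "card (A1 \<union> B1) = card A1 + card B1"
    using i dis by (simp add: card_Un_disjoint indep_finite)
  moreover have "h_set n b (A1 \<union> B1) = h_set n b A1 * h_set n b B1"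
    "h_set n b ((A - A1) \<union> (B - B1)) = h_set n b (A - A1) * h_set n b (B - B1)"
    using i nadj dis by (auto intro!: h_set_Un indep_Un)
  moreover have "h_set n b B1 * (h_set n b (A - A1) * h_set n b (B - B1)) =
      h_set n b (A - A1) * (h_set n b B1 * h_set n b (B - B1))"
    using i nadj sub by (intro ops_mult_left_commute h_set_commute) auto
  ultimately show ?thesis unfolding colouring_term_def using sub by (simp add: power_add mult.commute)
qed

lemma colouring_sum_Un:
  assumes "A \<subseteq> V" "B \<subseteq> V" "A \<inter> B = {}" "\<forall>x\<in>A. \<forall>y\<in>B. \<not> fadj V x y"
  shows "colouring_sum (A \<union> B) = colouring_sum A * colouring_sum B"
proof -
  have fin: "finite A" "finite B" using finite_subset[OF assms(1) finite_V] finite_subset[OF assms(2) finite_V] .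
  have "colouring_sum A * colouring_sum B =
      mat_sum (2^n) (\<lambda>p. colouring_term A (fst p) * colouring_term B (snd p)) (two_colourings V A \<times> two_colourings V B)"
    unfolding colouring_sum_def using assms fin
    by (intro mat_sum_mult) (auto simp: two_colourings_finite colouring_term_carrier)
  also have "\<dots> = mat_sum (2^n) (\<lambda>p. colouring_term (A \<union> B) (fst p \<union> snd p)) (two_colourings V A \<times> two_colourings V B)"
    using assms by (intro mat_sum_cong) (auto simp: colouring_term_Un)
  also have "\<dots> = colouring_sum (A \<union> B)"
    unfolding colouring_sum_def by (rule mat_sum_reindex_bij_betw[OF two_colourings_Un_bij[OF assms(3,4)]])
  finally show ?thesis by simp
qed

lemma colouring_sum_singleton: "v \<in> V \<Longrightarrow> colouring_sum {v} = 0\<^sub>m (2^n) (2^n)"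
proof -
  assume v: "v \<in> V"
  have colourings: "two_colourings V {v} = {{}, {v}}"
    unfolding two_colourings_def using v by (auto simp: indep_def)
  have "colouring_term {v} {} = hterm b v" "colouring_term {v} {v} = (-1) \<cdot>\<^sub>m hterm b v"
    using v by (simp_all add: colouring_term_def h_set_singleton)
  moreover have "dim_row (hterm b v) = 2^n" "dim_col (hterm b v) = 2^n"
    using hterm_carrier[OF v] unfolding carrier_mat_def by auto
  ultimately show ?thesis unfolding colouring_sum_def colourings
    by (subst mat_sum_doubleton) (auto intro!: eq_matI)
qed

lemma colouring_term_insert_pendant:
  assumes "W \<subseteq> V" "v \<in> W" "{y\<in>W. fadj V v y} = {w}" "W1 \<in> two_colourings V (W - {v})"
  shows "colouring_term W (if w \<in> W1 then W1 else insert v W1) = (-1) \<cdot>\<^sub>m (hterm b v * colouring_term (W - {v}) W1)"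
proof -
  have v: "v \<in> V" "v \<notin> W1" using assms(1,2,4) by (auto simp: two_colourings_def)
  have W1: "indep V W1" "W1 \<subseteq> V" "(W - {v}) - W1 \<subseteq> V" "W1 \<subseteq> W"
    using assms(1,4) by (auto simp: two_colourings_def indep_def)
  have extended: "(if w \<in> W1 then W1 else insert v W1) \<in> two_colourings V W"
    using two_colourings_insert_pendant_bij[OF assms(1-3)] assms(4) by (auto dest: bij_betw_apply)
  show ?thesis
  proof (cases "w \<in> W1")
    case True
    have e: "W - W1 = insert v ((W - {v}) - W1)" using assms(2) v by auto
    have "{y\<in>W1. fadj V v y} = {w}" using assms(3) W1(4) True by blast
    then have "hterm b v * h_set n b W1 = (-1) \<cdot>\<^sub>m (h_set n b W1 * hterm b v)"
      using hterm_h_set_swap[OF v(1) W1(1)] by simp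
    then have swap: "h_set n b W1 * hterm b v = (-1) \<cdot>\<^sub>m (hterm b v * h_set n b W1)"
      using v W1 by simp
    have "h_set n b (W - W1) = hterm b v * h_set n b ((W - {v}) - W1)"
      using extended True v unfolding e by (intro h_set_insert) (auto simp: two_colourings_def e)
    then have "colouring_term W W1 =
        (-1) ^ card W1 \<cdot>\<^sub>m ((h_set n b W1 * hterm b v) * h_set n b ((W - {v}) - W1))"
      using v W1 by (simp add: colouring_term_def)
    then show ?thesis unfolding swap using True v W1 by (simp add: colouring_term_def mult.commute)
  next
    case False
    have "W - insert v W1 = (W - {v}) - W1" by auto
    moreover have "h_set n b (insert v W1) = hterm b v * h_set n b W1"
      using extended False v by (intro h_set_insert) (auto simp: two_colourings_def)
    ultimately show ?thesis using False v W1 indep_finite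
      by (simp add: colouring_term_def)
  qed
qed

lemma colouring_sum_remove_pendant:
  assumes "W \<subseteq> V" "v \<in> W" "{y\<in>W. fadj V v y} = {w}"
  shows "colouring_sum W = (-1) \<cdot>\<^sub>m (hterm b v * colouring_sum (W - {v}))"
proof -
  have v: "v \<in> V" using assms(1,2) by auto
  have terms: "\<forall>W1\<in>two_colourings V (W - {v}). colouring_term (W - {v}) W1 \<in> ops"
    using assms(1) colouring_term_carrier[of "W - {v}"] by auto
  have "colouring_sum W = mat_sum (2^n) (\<lambda>W1. colouring_term W (if w \<in> W1 then W1 else insert v W1))
      (two_colourings V (W - {v}))"
    unfolding colouring_sum_def
    by (rule mat_sum_reindex_bij_betw[symmetric, OF two_colourings_insert_pendant_bij[OF assms]])
  also have "\<dots> = mat_sum (2^n) (\<lambda>W1. (-1) \<cdot>\<^sub>m (hterm b v * colouring_term (W - {v}) W1)) (two_colourings V (W - {v}))"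
    using colouring_term_insert_pendant[OF assms] by (intro mat_sum_cong) auto
  also have "\<dots> = (-1) \<cdot>\<^sub>m (hterm b v * colouring_sum (W - {v}))"
    unfolding colouring_sum_def using v terms
    by (simp add: mult_mat_sum_left smult_mat_sum)
  finally show ?thesis .
qed

end

locale claw_free_hamiltonian = pauli_hamiltonian +
  assumes claw_free_V: "claw_free V"
begin

lemma colouring_sum_eq_0_if_degree_le_1:
  "W \<subseteq> V \<Longrightarrow> v \<in> W \<Longrightarrow> card {y\<in>W. fadj V v y} \<le> 1 \<Longrightarrow> colouring_sum W = 0\<^sub>m (2^n) (2^n)"
proof (induction "card W" arbitrary: W v rule: less_induct)
  case less
  have finW: "finite W" using less.prems(1) finite_V finite_subset by blast
  have v: "v \<in> V" using less.prems by auto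
  show ?case
  proof (cases "two_colourings V W = {}")
    case True
    then show ?thesis unfolding colouring_sum_def by simp
  next
    case False
    then obtain W1 where W1: "W1 \<in> two_colourings V W" by blast
    have "finite {y\<in>W. fadj V v y}" using finW by simp
    then consider "{y\<in>W. fadj V v y} = {}" | w where "{y\<in>W. fadj V v y} = {w}"
      using less.prems(3) by (metis card_0_eq card_1_singletonE le_Suc_eq One_nat_def le_zero_eq)
    then show ?thesis
    proof cases
      case 1
      then have "colouring_sum ({v} \<union> (W - {v})) = colouring_sum {v} * colouring_sum (W - {v})"
        using less.prems v by (intro colouring_sum_Un) auto
      moreover have "{v} \<union> (W - {v}) = W" using less.prems(2) by auto
      ultimately show ?thesis using v by (simp add: colouring_sum_singleton)
    next
      case (2 w)
      then have "w \<in> {y\<in>W. fadj V v y}" by simp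
      then have w: "w \<in> W" "fadj V v w" by auto
      have "{y\<in>W - {v}. fadj V w y} = {y\<in>W. fadj V w y} - {v}" by auto
      moreover have "v \<in> {y\<in>W. fadj V w y}" using w less.prems(2) fadj_sym by auto
      ultimately have "card {y\<in>W - {v}. fadj V w y} \<le> 1"
        using degree_le_2_if_two_colourable[OF claw_free_V W1 w(1)] finW by (simp add: card_Diff_singleton)
      moreover have "card (W - {v}) < card W" using card_Diff1_less[OF finW less.prems(2)] .
      moreover have "w \<in> W - {v}" using w by auto
      ultimately have "colouring_sum (W - {v}) = 0\<^sub>m (2^n) (2^n)"
        using less.hyps less.prems(1) by blast
      then show ?thesis using colouring_sum_remove_pendant[OF less.prems(1,2) 2] hterm_carrier[OF v] by simp
    qed
  qed
qed

lemma degree_eq_2_if_colouring_sum_nonzero: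
  assumes "W \<subseteq> V" "colouring_sum W \<noteq> 0\<^sub>m (2^n) (2^n)" "x \<in> W"
  shows "card {y\<in>W. fadj V x y} = 2"
proof -
  obtain W1 where "W1 \<in> two_colourings V W" using assms(2) unfolding colouring_sum_def by fastforce
  then have "card {y\<in>W. fadj V x y} \<le> 2"
    using degree_le_2_if_two_colourable[OF claw_free_V _ assms(3)] by blast
  moreover have "\<not> card {y\<in>W. fadj V x y} \<le> 1"
    using colouring_sum_eq_0_if_degree_le_1[OF assms(1,3)] assms(2) by blast
  ultimately show ?thesis by simp
qed

end

section \<open>Even holes\<close>

definition cyclic_adj :: "nat \<Rightarrow> nat \<Rightarrow> nat \<Rightarrow> bool" where
  "cyclic_adj L i k \<longleftrightarrow> k = Suc i mod L \<or> i = Suc k mod L"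

definition cyclic_pred :: "nat \<Rightarrow> nat \<Rightarrow> nat" where
  "cyclic_pred L i = (if i = 0 then L - 1 else i - 1)"

lemma Suc_mod_if: "i < L \<Longrightarrow> Suc i mod L = (if Suc i = L then 0 else Suc i)"
  by auto

lemma cyclic_adj_parity:
  assumes "even L" "i < L" "k < L" "cyclic_adj L i k"
  shows "even i \<longleftrightarrow> odd k"
proof -
  have parity: "even i \<longleftrightarrow> odd k" if "k = Suc i mod L" "i < L" for i k
  proof (cases "Suc i = L")
    case True
    then show ?thesis using that assms(1) by auto
  next
    case False
    then show ?thesis using that by (simp add: Suc_mod_if)
  qed
  show ?thesis using assms parity[of k i] parity[of i k] unfolding cyclic_adj_def by auto
qed

lemma cyclic_adj_Suc: "Suc i < L \<Longrightarrow> cyclic_adj L i (Suc i)"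
  unfolding cyclic_adj_def by simp

lemma cyclic_adj_iff:
  assumes "i < L" "k < L"
  shows "cyclic_adj L i k \<longleftrightarrow> k = Suc i mod L \<or> k = cyclic_pred L i"
proof -
  have "i = Suc k mod L \<longleftrightarrow> k = cyclic_pred L i"
    using assms by (cases "Suc k = L") (auto simp: Suc_mod_if cyclic_pred_def)
  then show ?thesis unfolding cyclic_adj_def by blast
qed

lemma Suc_mod_neq_cyclic_pred: "3 \<le> L \<Longrightarrow> i < L \<Longrightarrow> Suc i mod L \<noteq> cyclic_pred L i"
  by (cases "Suc i = L") (auto simp: Suc_mod_if cyclic_pred_def)

lemma cyclic_pred_less: "i < L \<Longrightarrow> cyclic_pred L i < L"
  by (auto simp: cyclic_pred_def)

definition hole_cycle :: "pauli list set \<Rightarrow> pauli list list \<Rightarrow> bool" where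
  "hole_cycle V vs \<longleftrightarrow> distinct vs \<and> set vs \<subseteq> V \<and> 4 \<le> length vs \<and> even (length vs) \<and>
     (\<forall>i<length vs. \<forall>k<length vs. fadj V (vs!i) (vs!k) \<longleftrightarrow> cyclic_adj (length vs) i k)"

lemma even_hole_iff_hole_cycle: "even_hole V C \<longleftrightarrow> (\<exists>vs. hole_cycle V vs \<and> set vs = C)"
proof
  assume "even_hole V C"
  then obtain vs where "C \<subseteq> V" "card C \<ge> 4" "even (card C)" "distinct vs" "set vs = C"
      "\<forall>i<length vs. \<forall>k<length vs. fadj V (vs ! i) (vs ! k) \<longleftrightarrow> (k = Suc i mod length vs \<or> i = Suc k mod length vs)"
    unfolding even_hole_def by blast
  then show "\<exists>vs. hole_cycle V vs \<and> set vs = C"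
    unfolding hole_cycle_def cyclic_adj_def by (metis distinct_card)
next
  assume "\<exists>vs. hole_cycle V vs \<and> set vs = C"
  then show "even_hole V C" unfolding hole_cycle_def even_hole_def cyclic_adj_def
    by (metis distinct_card)
qed

definition even_class :: "'a list \<Rightarrow> 'a set" where
  "even_class vs = (\<lambda>i. vs ! i) ` {i. i < length vs \<and> even i}"

definition odd_class :: "'a list \<Rightarrow> 'a set" where
  "odd_class vs = (\<lambda>i. vs ! i) ` {i. i < length vs \<and> odd i}"

lemma even_odd_class_partition:
  assumes "distinct vs"
  shows "even_class vs \<union> odd_class vs = set vs" "even_class vs \<inter> odd_class vs = {}"
proof -
  have "vs ! i = vs ! k \<longleftrightarrow> i = k" if "i < length vs" "k < length vs" for i k
    using assms that nth_eq_iff_index_eq by blast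
  moreover have "set vs = (\<lambda>i. vs ! i) ` {i. i < length vs}" by (auto simp: set_conv_nth)
  ultimately show "even_class vs \<union> odd_class vs = set vs" "even_class vs \<inter> odd_class vs = {}"
    unfolding even_class_def odd_class_def by auto
qed

lemma set_minus_even_odd_class:
  assumes "distinct vs"
  shows "set vs - even_class vs = odd_class vs" "set vs - odd_class vs = even_class vs"
  using even_odd_class_partition[OF assms] by auto

lemma card_even_odd_class:
  assumes "distinct vs" "even (length vs)"
  shows "card (even_class vs) = length vs div 2" "card (odd_class vs) = length vs div 2"
proof -
  obtain m where m: "length vs = 2 * m" using assms(2) by (auto elim: evenE)
  have inj: "inj_on (\<lambda>i. vs ! i) {i. i < length vs \<and> P i}" for P
    using assms(1) by (simp add: inj_on_nth)
  have "{i. i < 2*m \<and> even i} = (\<lambda>j. 2*j) ` {..<m}" by (auto elim!: evenE)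
  moreover have "{i. i < 2*m \<and> odd i} = (\<lambda>j. 2*j+1) ` {..<m}" by (auto elim!: oddE)
  ultimately have "card {i. i < length vs \<and> even i} = m" "card {i. i < length vs \<and> odd i} = m"
    unfolding m by (simp_all add: card_image inj_on_def)
  then show "card (even_class vs) = length vs div 2" "card (odd_class vs) = length vs div 2"
    unfolding even_class_def odd_class_def using inj m by (simp_all add: card_image)
qed

lemma path_colours_alternate:
  assumes "W1 \<in> two_colourings V W" "set ps \<subseteq> W" "\<forall>i. Suc i < length ps \<longrightarrow> fadj V (ps ! i) (ps ! Suc i)"
  shows "j < length ps \<Longrightarrow> ps ! j \<in> W1 \<longleftrightarrow> (ps ! 0 \<in> W1 \<longleftrightarrow> even j)"
proof (induction j)
  case (Suc j)
  then have "ps ! j \<in> W1 \<longleftrightarrow> ps ! Suc j \<notin> W1"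
    using two_colourings_fadj[OF assms(1)] assms(2,3) by (meson Suc_lessD nth_mem subsetD)
  then show ?case using Suc by auto
qed simp

lemma hole_cycle_consecutive:
  "hole_cycle V vs \<Longrightarrow> Suc i < length vs \<Longrightarrow> fadj V (vs ! i) (vs ! Suc i)"
  unfolding hole_cycle_def using cyclic_adj_Suc by auto

lemma indep_even_odd_class:
  assumes "hole_cycle V vs"
  shows "indep V (even_class vs)" "indep V (odd_class vs)"
  using assms cyclic_adj_parity
  unfolding hole_cycle_def indep_def even_class_def odd_class_def by auto

lemma two_colourings_hole_cycle:
  assumes H: "hole_cycle V vs"
  shows "two_colourings V (set vs) = {even_class vs, odd_class vs}"
proof
  have d: "distinct vs" using H unfolding hole_cycle_def by auto
  show "{even_class vs, odd_class vs} \<subseteq> two_colourings V (set vs)"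
    unfolding two_colourings_def
    using even_odd_class_partition[OF d] set_minus_even_odd_class[OF d] indep_even_odd_class[OF H] by auto
  show "two_colourings V (set vs) \<subseteq> {even_class vs, odd_class vs}"
  proof
    fix W1 assume W1: "W1 \<in> two_colourings V (set vs)"
    then have sub: "W1 \<subseteq> set vs" unfolding two_colourings_def by auto
    have alt: "i < length vs \<Longrightarrow> vs ! i \<in> W1 \<longleftrightarrow> (vs ! 0 \<in> W1 \<longleftrightarrow> even i)" for i
      using path_colours_alternate[OF W1] hole_cycle_consecutive[OF H] by blast
    have sv: "x \<in> set vs \<Longrightarrow> \<exists>i<length vs. x = vs ! i" for x by (auto simp: in_set_conv_nth)
    show "W1 \<in> {even_class vs, odd_class vs}"
    proof (cases "vs ! 0 \<in> W1")
      case True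
      have "W1 = even_class vs"
      proof
        show "W1 \<subseteq> even_class vs" unfolding even_class_def using sub sv alt True by fastforce
        show "even_class vs \<subseteq> W1" unfolding even_class_def using alt True by auto
      qed
      then show ?thesis by simp
    next
      case False
      have "W1 = odd_class vs"
      proof
        show "W1 \<subseteq> odd_class vs" unfolding odd_class_def using sub sv alt False by fastforce
        show "odd_class vs \<subseteq> W1" unfolding odd_class_def using alt False by auto
      qed
      then show ?thesis by simp
    qed
  qed
qed

lemma even_class_neq_odd_class: "hole_cycle V vs \<Longrightarrow> even_class vs \<noteq> odd_class vs"
proof -
  assume H: "hole_cycle V vs"
  then have "vs ! 0 \<in> even_class vs" unfolding even_class_def hole_cycle_def by force
  moreover have "distinct vs" using H unfolding hole_cycle_def by auto
  ultimately show ?thesis using even_odd_class_partition by blast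
qed

lemma hole_cycle_degree:
  assumes H: "hole_cycle V vs" and i: "i < length vs"
  shows "card {y\<in>set vs. fadj V (vs ! i) y} = 2"
proof -
  let ?L = "length vs"
  have d: "distinct vs" and L: "4 \<le> ?L" using H unfolding hole_cycle_def by auto
  have adj: "fadj V (vs ! i) (vs ! k) \<longleftrightarrow> k = Suc i mod ?L \<or> k = cyclic_pred ?L i" if "k < ?L" for k
    using H i that cyclic_adj_iff unfolding hole_cycle_def by auto
  have "0 < ?L" using i by linarith
  then have succ: "Suc i mod ?L < ?L" and pred: "cyclic_pred ?L i < ?L" using i by (auto simp: cyclic_pred_less)
  have "{y\<in>set vs. fadj V (vs ! i) y} = (\<lambda>k. vs ! k) ` {Suc i mod ?L, cyclic_pred ?L i}"
    using adj succ pred by (auto simp: in_set_conv_nth)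
  moreover have "inj_on (\<lambda>k. vs ! k) {Suc i mod ?L, cyclic_pred ?L i}"
    using d succ pred by (intro inj_on_nth) auto
  ultimately show ?thesis using Suc_mod_neq_cyclic_pred[of ?L i] L i by (simp add: card_image)
qed

context pauli_hamiltonian
begin

lemma h_set_even_odd_class_commute:
  assumes H: "hole_cycle V vs"
  shows "h_set n b (even_class vs) * h_set n b (odd_class vs) = h_set n b (odd_class vs) * h_set n b (even_class vs)"
proof -
  have d: "distinct vs" and sV: "set vs \<subseteq> V" using H unfolding hole_cycle_def by auto
  note partition = even_odd_class_partition[OF d]
  note indeps = indep_even_odd_class[OF H]
  have sub: "even_class vs \<subseteq> V" "odd_class vs \<subseteq> V" using partition sV by auto
  \<comment> \<open>a vertex of one class anticommutes with exactly two terms of the other: its neighbours\<close>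
  have "h_set n b (odd_class vs) * hterm b x = hterm b x * h_set n b (odd_class vs)" if x: "x \<in> even_class vs" for x
  proof -
    obtain i where i: "i < length vs" "x = vs ! i" using x unfolding even_class_def by auto
    have "{y\<in>odd_class vs. fadj V x y} = {y\<in>set vs. fadj V x y}"
      using partition indeps x unfolding indep_def by blast
    then have "card {y\<in>odd_class vs. fadj V x y} = 2" using hole_cycle_degree[OF H i(1)] i by simp
    then show ?thesis using hterm_h_set_swap[OF _ indeps(2), of x] x sub by auto
  qed
  then have "h_set n b (odd_class vs) * set_prod (2^n) (hterm b) (even_class vs) =
      set_prod (2^n) (hterm b) (even_class vs) * h_set n b (odd_class vs)"
    using indeps indep_finite pairwise_commuting_hterm sub by (intro set_prod_commute) auto
  then show ?thesis unfolding h_set_def by simp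
qed

lemma h_hole_hole_cycle:
  assumes H: "hole_cycle V vs"
  shows "h_hole n V b (set vs) = h_set n b (even_class vs) * h_set n b (odd_class vs)"
proof -
  have d: "distinct vs" using H unfolding hole_cycle_def by auto
  define P where "P = (\<lambda>(Ca, Cb). Ca \<union> Cb = set vs \<and> Ca \<inter> Cb = {} \<and> indep V Ca \<and> indep V Cb)"
  have "P (even_class vs, odd_class vs)"
    unfolding P_def using even_odd_class_partition[OF d] indep_even_odd_class[OF H] by auto
  then have "P (SOME p. P p)" by (rule someI)
  then obtain Ca Cb where p: "(SOME p. P p) = (Ca, Cb)" "Ca \<union> Cb = set vs" "Ca \<inter> Cb = {}" "indep V Ca" "indep V Cb"
    unfolding P_def by (metis (mono_tags, lifting) case_prod_beta prod.collapse)
  have "h_hole n V b (set vs) = h_set n b Ca * h_set n b Cb"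
    unfolding h_hole_def P_def[symmetric] p(1) by simp
  moreover have "Cb = set vs - Ca" using p by auto
  moreover from this have "Ca \<in> two_colourings V (set vs)"
    using p unfolding two_colourings_def by auto
  ultimately show ?thesis
    using two_colourings_hole_cycle[OF H] set_minus_even_odd_class[OF d] h_set_even_odd_class_commute[OF H]
    by auto
qed

lemma colouring_sum_hole_cycle:
  assumes H: "hole_cycle V vs"
  shows "colouring_sum (set vs) = (2 * (-1) ^ (length vs div 2)) \<cdot>\<^sub>m h_hole n V b (set vs)"
proof -
  have d: "distinct vs" and sV: "set vs \<subseteq> V" and ev: "even (length vs)" using H unfolding hole_cycle_def by auto
  have carrier: "h_set n b (even_class vs) \<in> ops" "h_set n b (odd_class vs) \<in> ops"
    using even_odd_class_partition(1)[OF d] sV by (metis Un_subset_iff h_set_carrier)+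
  have "colouring_term (set vs) (even_class vs) = (-1) ^ (length vs div 2) \<cdot>\<^sub>m h_hole n V b (set vs)"
    "colouring_term (set vs) (odd_class vs) = (-1) ^ (length vs div 2) \<cdot>\<^sub>m h_hole n V b (set vs)"
    unfolding colouring_term_def h_hole_hole_cycle[OF H]
    using set_minus_even_odd_class[OF d] card_even_odd_class[OF d ev] h_set_even_odd_class_commute[OF H]
    by simp_all
  then show ?thesis
    unfolding colouring_sum_def two_colourings_hole_cycle[OF H] h_hole_hole_cycle[OF H]
    using even_class_neq_odd_class[OF H] carrier
    by (subst mat_sum_doubleton) (auto intro!: eq_matI simp: h_hole_hole_cycle[OF H])
qed

end

definition path_in :: "pauli list set \<Rightarrow> pauli list set \<Rightarrow> pauli list list \<Rightarrow> bool" where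
  "path_in V W ps \<longleftrightarrow> distinct ps \<and> set ps \<subseteq> W \<and> ps \<noteq> [] \<and>
     (\<forall>i. Suc i < length ps \<longrightarrow> fadj V (ps ! i) (ps ! Suc i))"

lemma maximal_path_in:
  assumes "finite W" "v \<in> W"
  obtains ps where "path_in V W ps" "\<forall>y\<in>W. fadj V (last ps) y \<longrightarrow> y \<in> set ps"
proof -
  have "length ps < card W + 1" if "path_in V W ps" for ps
    using that assms(1) unfolding path_in_def by (metis card_mono distinct_card less_Suc_eq_le Suc_eq_plus1)
  moreover have "path_in V W [v]" unfolding path_in_def using assms(2) by auto
  ultimately obtain ps where ps: "path_in V W ps" and longest: "\<forall>qs. path_in V W qs \<longrightarrow> length qs \<le> length ps"
    using ex_has_greatest_nat[of "path_in V W" "[v]" length "card W + 1"] by blast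
  have "y \<in> set ps" if "y \<in> W" "fadj V (last ps) y" for y
  proof (rule ccontr)
    assume "y \<notin> set ps"
    have "path_in V W (ps @ [y])" unfolding path_in_def
    proof (intro conjI allI impI)
      show "distinct (ps @ [y])" "set (ps @ [y]) \<subseteq> W" "ps @ [y] \<noteq> []"
        using ps that \<open>y \<notin> set ps\<close> unfolding path_in_def by auto
      fix i assume i: "Suc i < length (ps @ [y])"
      show "fadj V ((ps @ [y]) ! i) ((ps @ [y]) ! Suc i)"
      proof (cases "Suc i < length ps")
        case True
        then show ?thesis using ps unfolding path_in_def by (simp add: nth_append)
      next
        case False
        then have "i = length ps - 1" "Suc i = length ps" using i by auto
        then show ?thesis using that ps unfolding path_in_def by (simp add: nth_append last_conv_nth)
      qed
    qed
    then show False using longest by fastforce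
  qed
  then show ?thesis using that ps by blast
qed

text \<open>If all degrees in W are 2, the last vertex of a maximal path has a second neighbour on the
  path; it can only be the first vertex, since an inner vertex would get a third neighbour.\<close>
lemma maximal_path_closes:
  assumes deg: "\<forall>x\<in>W. card {y\<in>W. fadj V x y} = 2" and ps: "path_in V W ps"
    and maximal: "\<forall>y\<in>W. fadj V (last ps) y \<longrightarrow> y \<in> set ps"
  shows "3 \<le> length ps" "fadj V (last ps) (hd ps)"
proof -
  define L where "L = length ps"
  define N where "N = (\<lambda>x. {y\<in>W. fadj V x y})"
  have d: "distinct ps" and inW: "\<And>i. i < L \<Longrightarrow> ps ! i \<in> W" and L0: "0 < L"
    and padj: "\<And>i. Suc i < L \<Longrightarrow> fadj V (ps ! i) (ps ! Suc i)"
    using ps unfolding path_in_def L_def by auto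
  have inj: "\<And>i k. i < L \<Longrightarrow> k < L \<Longrightarrow> ps ! i = ps ! k \<longleftrightarrow> i = k"
    using d L_def nth_eq_iff_index_eq by blast
  define p where "p = ps ! (L - 1)"
  have p: "p = last ps" "p \<in> W" using inW L0 ps unfolding p_def L_def path_in_def by (auto simp: last_conv_nth)
  have cardN: "\<And>x. x \<in> W \<Longrightarrow> card (N x) = 2" and finN: "\<And>x. x \<in> W \<Longrightarrow> finite (N x)"
    using deg N_def by (auto intro: card_ge_0_finite)
  obtain q where q: "q \<in> N p" "L \<ge> 2 \<longrightarrow> q \<noteq> ps ! (L - 2)"
  proof -
    obtain a c where "N p = {a, c}" "a \<noteq> c" using cardN[OF p(2)] by (meson card_2_iff)
    then show ?thesis using that by (cases "L \<ge> 2 \<and> a = ps ! (L - 2)") auto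
  qed
  have pq: "fadj V p q" and "q \<in> W" using q unfolding N_def by auto
  then have "q \<in> set ps" using maximal p(1) by blast
  then obtain i where i: "i < L" "q = ps ! i" using L_def by (auto simp: in_set_conv_nth)
  have "i \<noteq> L - 1" using pq i p_def by auto
  moreover have "i \<noteq> L - 2 \<or> L < 2" using q i by auto
  ultimately have iL: "i + 2 < L" using i by auto
  have i0: "i = 0"
  proof (rule ccontr)
    assume "i \<noteq> 0"
    have "{ps ! (i - 1), ps ! Suc i, p} \<subseteq> N (ps ! i)"
    proof -
      have "fadj V (ps ! (i - 1)) (ps ! i)" using padj[of "i - 1"] \<open>i \<noteq> 0\<close> iL by simp
      moreover have "fadj V (ps ! i) (ps ! Suc i)" using padj[of i] iL by simp
      moreover have "fadj V (ps ! i) p" using pq i fadj_sym by auto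
      ultimately show ?thesis unfolding N_def using inW iL p(2) fadj_sym by auto
    qed
    moreover have "card {ps ! (i - 1), ps ! Suc i, p} = 3"
      using inj iL \<open>i \<noteq> 0\<close> p_def by (auto simp: card_insert_if)
    moreover have "ps ! i \<in> W" using inW iL by simp
    ultimately have "3 \<le> (2::nat)" using card_mono[OF finN] cardN by metis
    then show False by simp
  qed
  show "3 \<le> length ps" using iL L_def by simp
  show "fadj V (last ps) (hd ps)" using pq i i0 p(1) L0 ps unfolding L_def path_in_def by (simp add: hd_conv_nth)
qed

lemma closed_path_neighbours:
  assumes deg: "\<forall>x\<in>W. card {y\<in>W. fadj V x y} = 2" and ps: "path_in V W ps"
    and L: "3 \<le> length ps" and close: "fadj V (last ps) (hd ps)" and j: "j < length ps"
  shows "{y\<in>W. fadj V (ps ! j) y} = {ps ! (Suc j mod length ps), ps ! cyclic_pred (length ps) j}"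
proof -
  let ?L = "length ps"
  have inW: "\<And>i. i < ?L \<Longrightarrow> ps ! i \<in> W" and padj: "\<And>i. Suc i < ?L \<Longrightarrow> fadj V (ps ! i) (ps ! Suc i)"
    and d: "distinct ps" using ps unfolding path_in_def by auto
  have close': "fadj V (ps ! (?L - 1)) (ps ! 0)" using close ps L by (simp add: last_conv_nth hd_conv_nth path_in_def)
  have succ: "fadj V (ps ! j) (ps ! (Suc j mod ?L))"
  proof (cases "Suc j = ?L")
    case True
    then have "j = ?L - 1" by simp
    then show ?thesis using close' True by simp
  qed (use padj[of j] j in simp)
  have pred: "fadj V (ps ! j) (ps ! cyclic_pred ?L j)"
    using padj[of "j - 1"] close' j fadj_sym by (cases "j = 0") (auto simp: cyclic_pred_def)
  have indices: "Suc j mod ?L < ?L" "cyclic_pred ?L j < ?L" "Suc j mod ?L \<noteq> cyclic_pred ?L j"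
    using j L Suc_mod_neq_cyclic_pred cyclic_pred_less by (auto intro: mod_less_divisor)
  then have "card {ps ! (Suc j mod ?L), ps ! cyclic_pred ?L j} = 2"
    using d by (simp add: nth_eq_iff_index_eq)
  moreover have "{ps ! (Suc j mod ?L), ps ! cyclic_pred ?L j} \<subseteq> {y\<in>W. fadj V (ps ! j) y}"
    using succ pred inW indices by auto
  moreover have "finite {y\<in>W. fadj V (ps ! j) y}" "card {y\<in>W. fadj V (ps ! j) y} = 2"
    using deg inW[OF j] by (auto intro: card_ge_0_finite)
  ultimately show ?thesis by (metis card_subset_eq)
qed

lemma closed_path_fadj_iff:
  assumes deg: "\<forall>x\<in>W. card {y\<in>W. fadj V x y} = 2" and ps: "path_in V W ps"
    and L: "3 \<le> length ps" and close: "fadj V (last ps) (hd ps)"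
    and j: "j < length ps" and k: "k < length ps"
  shows "fadj V (ps ! j) (ps ! k) \<longleftrightarrow> cyclic_adj (length ps) j k"
proof -
  let ?L = "length ps"
  have d: "distinct ps" and sW: "set ps \<subseteq> W" using ps unfolding path_in_def by auto
  have "fadj V (ps ! j) (ps ! k) \<longleftrightarrow> ps ! k \<in> {y\<in>W. fadj V (ps ! j) y}" using sW k by auto
  also have "\<dots> \<longleftrightarrow> ps ! k = ps ! (Suc j mod ?L) \<or> ps ! k = ps ! cyclic_pred ?L j"
    unfolding closed_path_neighbours[OF deg ps L close j] by simp
  also have "\<dots> \<longleftrightarrow> k = Suc j mod ?L \<or> k = cyclic_pred ?L j"
  proof -
    have "0 < ?L" using j by linarith
    then show ?thesis using nth_eq_iff_index_eq[OF d] j k cyclic_pred_less[OF j] by simp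
  qed
  finally show ?thesis using cyclic_adj_iff[OF j k] by simp
qed

lemma closed_path_closed:
  assumes deg: "\<forall>x\<in>W. card {y\<in>W. fadj V x y} = 2" and ps: "path_in V W ps"
    and L: "3 \<le> length ps" and close: "fadj V (last ps) (hd ps)"
    and "x \<in> set ps" "y \<in> W" "fadj V x y"
  shows "y \<in> set ps"
proof -
  obtain j where j: "j < length ps" "x = ps ! j" using assms(5) unfolding in_set_conv_nth by blast
  then have "y \<in> {y\<in>W. fadj V (ps ! j) y}" using assms(6,7) by simp
  then have "y \<in> {ps ! (Suc j mod length ps), ps ! cyclic_pred (length ps) j}"
    unfolding closed_path_neighbours[OF deg ps L close j(1)] .
  moreover have "0 < length ps" using j(1) by linarith
  then have "Suc j mod length ps < length ps" "cyclic_pred (length ps) j < length ps"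
    using j(1) cyclic_pred_less by simp_all
  ultimately show ?thesis by auto
qed

lemma exists_closed_hole_cycle:
  assumes "finite W" "W \<subseteq> V" "W1 \<in> two_colourings V W"
    and deg: "\<forall>x\<in>W. card {y\<in>W. fadj V x y} = 2" and "v \<in> W"
  shows "\<exists>ps. hole_cycle V ps \<and> set ps \<subseteq> W \<and> (\<forall>x\<in>set ps. \<forall>y\<in>W. fadj V x y \<longrightarrow> y \<in> set ps)"
proof -
  obtain ps where ps: "path_in V W ps" and maximal: "\<forall>y\<in>W. fadj V (last ps) y \<longrightarrow> y \<in> set ps"
    using maximal_path_in[OF assms(1,5)] by blast
  let ?L = "length ps"
  note closes = maximal_path_closes[OF deg ps maximal]
  have d: "distinct ps" and sW: "set ps \<subseteq> W" and L0: "0 < ?L"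
    and padj: "\<forall>i. Suc i < ?L \<longrightarrow> fadj V (ps ! i) (ps ! Suc i)"
    using ps unfolding path_in_def by auto
  \<comment> \<open>the colours alternate along the path and differ across the closing edge\<close>
  have "last ps = ps ! (?L - 1)" "hd ps = ps ! 0" using L0 by (simp_all add: last_conv_nth hd_conv_nth)
  moreover have "ps ! (?L - 1) \<in> W" "ps ! 0 \<in> W" using sW L0 by auto
  ultimately have "ps ! (?L - 1) \<in> W1 \<longleftrightarrow> ps ! 0 \<notin> W1"
    using two_colourings_fadj[OF assms(3)] closes(2) by metis
  then have even: "even ?L" using path_colours_alternate[OF assms(3) sW padj, of "?L - 1"] L0 by auto
  then have "4 \<le> ?L" using closes(1) by (cases "?L = 3") auto
  then have "hole_cycle V ps"
    unfolding hole_cycle_def using d sW assms(2) even closed_path_fadj_iff[OF deg ps closes] by blast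
  then show ?thesis using sW closed_path_closed[OF deg ps closes] by blast
qed

section \<open>Configurations of compatible even holes\<close>

lemma even_hole_subset: "even_hole V C \<Longrightarrow> C \<subseteq> V"
  unfolding even_hole_def by auto

lemma even_hole_configsD:
  assumes "X \<in> even_hole_configs V"
  shows "\<forall>C\<in>X. even_hole V C" "\<forall>C\<in>X. \<forall>D\<in>X. C \<noteq> D \<longrightarrow> compatible V C D"
  using assms unfolding even_hole_configs_def by auto

lemma Union_even_hole_configs_subset: "X \<in> even_hole_configs V \<Longrightarrow> \<Union>X \<subseteq> V"
  using even_hole_configsD(1) even_hole_subset by blast

lemma finite_even_hole_config:
  assumes "finite V" "X \<in> even_hole_configs V"
  shows "finite X"
proof (rule finite_subset)
  show "X \<subseteq> Pow V" using even_hole_configsD(1)[OF assms(2)] even_hole_subset by blast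
qed (use assms(1) in simp)

lemma insert_even_hole_configs:
  assumes X: "X \<in> even_hole_configs V" and C: "even_hole V C"
    and disjoint: "C \<inter> \<Union>X = {}" and nadj: "\<forall>x\<in>C. \<forall>y\<in>\<Union>X. \<not> fadj V x y"
  shows "insert C X \<in> even_hole_configs V"
proof -
  have "compatible V C D" "compatible V D C" if "D \<in> X" for D
    using that disjoint nadj fadj_sym unfolding compatible_def by blast+
  then show ?thesis using X C unfolding even_hole_configs_def by auto
qed

lemma even_hole_configs_insertD:
  assumes "insert C X \<in> even_hole_configs V" "C \<notin> X"
  shows "X \<in> even_hole_configs V" "even_hole V C" "C \<inter> \<Union>X = {}" "\<forall>x\<in>C. \<forall>y\<in>\<Union>X. \<not> fadj V x y"
proof -
  note D = even_hole_configsD[OF assms(1)]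
  have "\<forall>C\<in>X. even_hole V C" "\<forall>C\<in>X. \<forall>D\<in>X. C \<noteq> D \<longrightarrow> compatible V C D" using D by simp_all
  then show "X \<in> even_hole_configs V" unfolding even_hole_configs_def by blast
  show "even_hole V C" using D(1) by simp
  have "compatible V C D" if "D \<in> X" for D
    using D(2) that assms(2) by (metis insertCI)
  then show "C \<inter> \<Union>X = {}" "\<forall>x\<in>C. \<forall>y\<in>\<Union>X. \<not> fadj V x y" unfolding compatible_def by blast+
qed

lemma even_card_Union_even_hole_config:
  assumes "finite V" "X \<in> even_hole_configs V"
  shows "even (card (\<Union>X))"
proof -
  have "finite X" using finite_even_hole_config[OF assms] .
  then show ?thesis using assms(2)
  proof (induction X rule: finite_induct)
    case (insert C X)
    note hyps = even_hole_configs_insertD[OF insert.prems insert.hyps(2)]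
    have "finite C" "finite (\<Union>X)"
      using finite_subset[OF even_hole_subset[OF hyps(2)] assms(1)]
        finite_subset[OF Union_even_hole_configs_subset[OF hyps(1)] assms(1)] .
    then have "card (\<Union>(insert C X)) = card C + card (\<Union>X)" using hyps(3) by (simp add: card_Un_disjoint)
    then show ?case using insert.IH[OF hyps(1)] hyps(2) unfolding even_hole_def by simp
  qed simp
qed

lemma hole_cycle_subset_if_closed:
  assumes H: "hole_cycle V vs" and "set vs \<subseteq> U"
    and closed: "\<forall>y\<in>D. \<forall>z\<in>U. fadj V y z \<longrightarrow> z \<in> D" and j: "j < length vs" "vs ! j \<in> D"
  shows "set vs \<subseteq> D"
proof -
  let ?L = "length vs"
  have L0: "0 < ?L" using j by linarith
  have adj: "a < ?L \<Longrightarrow> fadj V (vs ! a) (vs ! (Suc a mod ?L))" for a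
    using H L0 unfolding hole_cycle_def cyclic_adj_def by auto
  have reach: "vs ! ((j + m) mod ?L) \<in> D" for m
  proof (induction m)
    case (Suc m)
    have "(j + Suc m) mod ?L = Suc ((j + m) mod ?L) mod ?L" by (simp add: mod_Suc_eq)
    moreover have "vs ! (Suc ((j + m) mod ?L) mod ?L) \<in> U" using assms(2) L0 by auto
    ultimately show ?case using closed Suc adj[of "(j + m) mod ?L"] L0 by auto
  qed (use j in simp)
  show ?thesis
  proof
    fix x assume "x \<in> set vs"
    then obtain i where i: "i < ?L" "x = vs ! i" by (auto simp: in_set_conv_nth)
    then have "(j + (?L - j + i)) mod ?L = i" using j by simp
    then show "x \<in> D" using reach[of "?L - j + i"] i by simp
  qed
qed

lemma even_hole_config_closed:
  "X \<in> even_hole_configs V \<Longrightarrow> D \<in> X \<Longrightarrow> \<forall>y\<in>D. \<forall>z\<in>\<Union>X. fadj V y z \<longrightarrow> z \<in> D"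
  unfolding even_hole_configs_def compatible_def by blast

text \<open>Each hole of a configuration is a connected component of the subgraph induced by the
  union, so the union determines the configuration.\<close>
lemma even_hole_config_member_if_same_Union:
  assumes X: "X \<in> even_hole_configs V" and Y: "Y \<in> even_hole_configs V" and U: "\<Union>X = \<Union>Y"
    and C: "C \<in> X"
  shows "C \<in> Y"
proof -
  have "even_hole V C" using X C unfolding even_hole_configs_def by auto
  then obtain vs where H: "hole_cycle V vs" "set vs = C" using even_hole_iff_hole_cycle by blast
  have L: "0 < length vs" using H unfolding hole_cycle_def by auto
  have v0: "vs ! 0 \<in> C" using H L by auto
  then have "vs ! 0 \<in> \<Union>Y" using C U by blast
  then obtain D where D: "D \<in> Y" "vs ! 0 \<in> D" by auto
  have "even_hole V D" using Y D unfolding even_hole_configs_def by auto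
  then obtain ws where K: "hole_cycle V ws" "set ws = D" using even_hole_iff_hole_cycle by blast
  have "C \<subseteq> D"
    using hole_cycle_subset_if_closed[OF H(1), of "\<Union>Y" D 0] H C U D even_hole_config_closed[OF Y D(1)] L
    by auto
  moreover have "D \<subseteq> C"
  proof -
    have "vs ! 0 \<in> set ws" using D K by simp
    then obtain j where j: "j < length ws" "ws ! j = vs ! 0" by (auto simp: in_set_conv_nth)
    then show ?thesis
      using hole_cycle_subset_if_closed[OF K(1), of "\<Union>X" C j] K D U C v0 even_hole_config_closed[OF X C]
      by auto
  qed
  ultimately show ?thesis using D by auto
qed

lemma inj_on_Union_even_hole_configs: "inj_on Union (even_hole_configs V)"
  unfolding inj_on_def using even_hole_config_member_if_same_Union by blast

context pauli_hamiltonian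
begin

lemma h_hole_carrier: "even_hole V C \<Longrightarrow> h_hole n V b C \<in> ops"
proof -
  assume "even_hole V C"
  then obtain vs where H: "hole_cycle V vs" "set vs = C" using even_hole_iff_hole_cycle by blast
  then have "even_class vs \<subseteq> V" "odd_class vs \<subseteq> V"
    using even_odd_class_partition(1)[of vs] unfolding hole_cycle_def by auto
  then show ?thesis using h_hole_hole_cycle[OF H(1)] H(2) by simp
qed

lemma ops_products_commute:
  assumes "A \<in> ops" "B \<in> ops" "C \<in> ops" "D \<in> ops"
    and "A * C = C * A" "A * D = D * A" "B * C = C * B" "B * D = D * B"
  shows "(A * B) * (C * D) = (C * D) * (A * B)"
proof -
  have "(A * B) * (C * D) = A * (B * (C * D))" using assms by simp
  also have "B * (C * D) = C * (B * D)" by (rule ops_mult_left_commute[OF assms(2,3,4,7)])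
  also have "A * (C * (B * D)) = C * (A * (B * D))"
    using assms(2,4) by (intro ops_mult_left_commute[OF assms(1,3) _ assms(5)]) simp
  also have "B * D = D * B" by fact
  also have "A * (D * B) = D * (A * B)" by (rule ops_mult_left_commute[OF assms(1,4,2,6)])
  also have "C * (D * (A * B)) = (C * D) * (A * B)" using assms by simp
  finally show ?thesis .
qed

lemma h_hole_commute:
  assumes "even_hole V C" "even_hole V D" "compatible V C D"
  shows "h_hole n V b C * h_hole n V b D = h_hole n V b D * h_hole n V b C"
proof -
  obtain vs where H: "hole_cycle V vs" "set vs = C" using assms(1) even_hole_iff_hole_cycle by blast
  obtain ws where K: "hole_cycle V ws" "set ws = D" using assms(2) even_hole_iff_hole_cycle by blast
  define Ca Cb Da Db where "Ca = even_class vs" "Cb = odd_class vs" "Da = even_class ws" "Db = odd_class ws"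
  have sub: "Ca \<subseteq> C" "Cb \<subseteq> C" "Da \<subseteq> D" "Db \<subseteq> D"
    using H K even_odd_class_partition(1) unfolding Ca_Cb_Da_Db_def hole_cycle_def by blast+
  have ind: "indep V Ca" "indep V Cb" "indep V Da" "indep V Db"
    using indep_even_odd_class[OF H(1)] indep_even_odd_class[OF K(1)] unfolding Ca_Cb_Da_Db_def by auto
  then have ops: "h_set n b Ca \<in> ops" "h_set n b Cb \<in> ops" "h_set n b Da \<in> ops" "h_set n b Db \<in> ops"
    unfolding indep_def by auto
  have comm: "h_set n b S * h_set n b T = h_set n b T * h_set n b S"
    if "S \<in> {Ca, Cb}" "T \<in> {Da, Db}" for S T
    using that sub ind assms(3) unfolding compatible_def by (intro h_set_commute) blast+
  have "(h_set n b Ca * h_set n b Cb) * (h_set n b Da * h_set n b Db) =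
      (h_set n b Da * h_set n b Db) * (h_set n b Ca * h_set n b Cb)"
    using ops comm by (intro ops_products_commute) auto
  then show ?thesis unfolding h_hole_hole_cycle[OF H(1), unfolded H(2)] h_hole_hole_cycle[OF K(1), unfolded K(2)]
    Ca_Cb_Da_Db_def .
qed

lemma pairwise_commuting_h_hole:
  "X \<in> even_hole_configs V \<Longrightarrow> pairwise_commuting (2^n) (h_hole n V b) X"
  unfolding pairwise_commuting_def
  using even_hole_configsD h_hole_carrier h_hole_commute by metis

lemma colouring_sum_Union_even_hole_config:
  assumes "X \<in> even_hole_configs V"
  shows "colouring_sum (\<Union>X) = (2 ^ card X * (-1) ^ (card (\<Union>X) div 2)) \<cdot>\<^sub>m set_prod (2^n) (h_hole n V b) X"
proof -
  have "finite X" using finite_even_hole_config[OF finite_V assms] .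
  then show ?thesis using assms
  proof (induction X rule: finite_induct)
    case empty
    then show ?case by (simp add: colouring_sum_empty)
  next
    case (insert C X)
    note hyps = even_hole_configs_insertD[OF insert.prems insert.hyps(2)]
    obtain vs where H: "hole_cycle V vs" "set vs = C" using hyps(2) even_hole_iff_hole_cycle by blast
    have sub: "C \<subseteq> V" "\<Union>X \<subseteq> V"
      using even_hole_subset[OF hyps(2)] Union_even_hole_configs_subset[OF hyps(1)] .
    have "card (C \<union> \<Union>X) = card C + card (\<Union>X)"
      using finite_subset[OF sub(1) finite_V] finite_subset[OF sub(2) finite_V] hyps(3)
      by (simp add: card_Un_disjoint)
    moreover have "even (card C)" "even (card (\<Union>X))"
      using hyps(2) even_card_Union_even_hole_config[OF finite_V hyps(1)] unfolding even_hole_def by auto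
    ultimately have card: "card (\<Union>(insert C X)) div 2 = card C div 2 + card (\<Union>X) div 2"
      by (auto elim!: evenE)
    have "colouring_sum C = (2 * (-1) ^ (card C div 2)) \<cdot>\<^sub>m h_hole n V b C"
      using colouring_sum_hole_cycle[OF H(1)] H distinct_card[of vs] unfolding hole_cycle_def by simp
    moreover have "h_hole n V b C \<in> ops" "set_prod (2^n) (h_hole n V b) X \<in> ops"
      using h_hole_carrier[OF hyps(2)] pairwise_commuting_h_hole[OF hyps(1)] insert.hyps(1)
      unfolding pairwise_commuting_def by (auto intro: set_prod_carrier)
    moreover have "set_prod (2^n) (h_hole n V b) (insert C X) = h_hole n V b C * set_prod (2^n) (h_hole n V b) X"
      using insert.hyps pairwise_commuting_h_hole[OF insert.prems] by (rule set_prod_insert)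
    moreover have "colouring_sum (\<Union>(insert C X)) = colouring_sum C * colouring_sum (\<Union>X)"
      using colouring_sum_Un[OF sub hyps(3,4)] by simp
    ultimately show ?case using insert.IH[OF hyps(1)] insert.hyps(1,2) card
      by (simp add: power_add ac_simps)
  qed
qed

end

context claw_free_hamiltonian
begin

lemma closed_even_hole_if_colouring_sum_nonzero:
  assumes "W \<subseteq> V" "colouring_sum W \<noteq> 0\<^sub>m (2^n) (2^n)" "v \<in> W"
  obtains C where "even_hole V C" "C \<noteq> {}" "C \<subseteq> W" "\<forall>x\<in>C. \<forall>y\<in>W - C. \<not> fadj V x y"
proof -
  have "two_colourings V W \<noteq> {}"
    using assms(2) unfolding colouring_sum_def by (intro notI) simp
  then obtain W1 where W1: "W1 \<in> two_colourings V W" by blast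
  have deg: "\<forall>x\<in>W. card {y\<in>W. fadj V x y} = 2"
    using degree_eq_2_if_colouring_sum_nonzero[OF assms(1,2)] by blast
  obtain ps where ps: "hole_cycle V ps" "set ps \<subseteq> W" and closed: "\<forall>x\<in>set ps. \<forall>y\<in>W. fadj V x y \<longrightarrow> y \<in> set ps"
    using exists_closed_hole_cycle[OF finite_subset[OF assms(1) finite_V] assms(1) W1 deg assms(3)] by blast
  have "even_hole V (set ps)" using ps(1) even_hole_iff_hole_cycle by blast
  moreover have "set ps \<noteq> {}" using ps(1) unfolding hole_cycle_def by auto
  ultimately show ?thesis using that ps(2) closed by blast
qed

lemma Union_even_hole_config_if_colouring_sum_nonzero:
  "W \<subseteq> V \<Longrightarrow> colouring_sum W \<noteq> 0\<^sub>m (2^n) (2^n) \<Longrightarrow> \<exists>X\<in>even_hole_configs V. \<Union>X = W"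
proof (induction "card W" arbitrary: W rule: less_induct)
  case less
  show ?case
  proof (cases "W = {}")
    case True
    then show ?thesis unfolding even_hole_configs_def by auto
  next
    case False
    then obtain v where "v \<in> W" by blast
    then obtain C where C: "even_hole V C" "C \<noteq> {}" "C \<subseteq> W" and nadj: "\<forall>x\<in>C. \<forall>y\<in>W - C. \<not> fadj V x y"
      using closed_even_hole_if_colouring_sum_nonzero less.prems by blast
    have "W - C \<subseteq> V" using less.prems(1) by blast
    then have "colouring_sum W = colouring_sum C * colouring_sum (W - C)"
      using colouring_sum_Un[of C "W - C"] C less.prems(1) nadj by (simp add: Un_absorb1)
    then have nonzero: "colouring_sum (W - C) \<noteq> 0\<^sub>m (2^n) (2^n)"
      using less.prems(2) right_mult_zero_mat[of "colouring_sum C" "2^n" "2^n" "2^n"] by auto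
    have "W - C \<subset> W" using C(2,3) by blast
    then have smaller: "card (W - C) < card W"
      using finite_subset[OF less.prems(1) finite_V] by (rule psubset_card_mono[rotated])
    obtain X where X: "X \<in> even_hole_configs V" "\<Union>X = W - C"
      using less.hyps[OF smaller \<open>W - C \<subseteq> V\<close> nonzero] by blast
    have "insert C X \<in> even_hole_configs V"
      using insert_even_hole_configs[OF X(1) C(1)] nadj unfolding X(2) by blast
    moreover have "\<Union>(insert C X) = W" using X(2) C(3) by blast
    ultimately show ?thesis by blast
  qed
qed

lemma mat_sum_colouring_sums_eq_sum_even_hole_configs:
  "mat_sum (2^n) (\<lambda>W. c W \<cdot>\<^sub>m colouring_sum W) (Pow V) =
   mat_sum (2^n) (\<lambda>X. c (\<Union>X) \<cdot>\<^sub>m colouring_sum (\<Union>X)) (even_hole_configs V)"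
proof -
  have "mat_sum (2^n) (\<lambda>W. c W \<cdot>\<^sub>m colouring_sum W) (Pow V) =
      mat_sum (2^n) (\<lambda>W. c W \<cdot>\<^sub>m colouring_sum W) (Union ` even_hole_configs V)"
  proof (rule mat_sum_mono_neutral)
    show "Union ` even_hole_configs V \<subseteq> Pow V" using Union_even_hole_configs_subset by blast
    show "\<forall>W\<in>Pow V - Union ` even_hole_configs V. c W \<cdot>\<^sub>m colouring_sum W = 0\<^sub>m (2^n) (2^n)"
    proof
      fix W assume "W \<in> Pow V - Union ` even_hole_configs V"
      then have "colouring_sum W = 0\<^sub>m (2^n) (2^n)"
        using Union_even_hole_config_if_colouring_sum_nonzero[of W] by blast
      then show "c W \<cdot>\<^sub>m colouring_sum W = 0\<^sub>m (2^n) (2^n)" by simp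
    qed
  qed (use finite_V in simp)
  also have "\<dots> = mat_sum (2^n) (\<lambda>X. c (\<Union>X) \<cdot>\<^sub>m colouring_sum (\<Union>X)) (even_hole_configs V)"
    by (rule mat_sum_reindex_bij_betw[symmetric]) (simp add: inj_on_Union_even_hole_configs inj_on_imp_bij_betw)
  finally show ?thesis .
qed

end

section \<open>Expanding the product of transfer operators\<close>

definition indep_outside :: "pauli list set \<Rightarrow> pauli list set \<Rightarrow> pauli list set set" where
  "indep_outside V W = {K. K \<subseteq> V - closed_nbhd V W \<and> indep V K}"

lemma indep_outside_disjoint: "K \<in> indep_outside V W \<Longrightarrow> K \<inter> W = {}"
  unfolding indep_outside_def closed_nbhd_def by auto

lemma indep_outside_nadj: "K \<in> indep_outside V W \<Longrightarrow> k \<in> K \<Longrightarrow> w \<in> W \<Longrightarrow> \<not> fadj V k w"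
  unfolding indep_outside_def closed_nbhd_def using fadj_in_V by blast

definition merge_colouring ::
  "pauli list set \<times> pauli list set \<times> pauli list set \<Rightarrow> pauli list set \<times> pauli list set" where
  "merge_colouring q = (case q of (W, K, W1) \<Rightarrow> (K \<union> W1, K \<union> (W - W1)))"

lemma merge_colouring_bij:
  "bij_betw merge_colouring (SIGMA W:Pow V. indep_outside V W \<times> two_colourings V W)
     ({S. indep V S} \<times> {S. indep V S})"
proof (rule bij_betw_byWitness[where f'="\<lambda>(S1, S2). ((S1 - S2) \<union> (S2 - S1), S1 \<inter> S2, S1 - S2)"])
  show "\<forall>q\<in>SIGMA W:Pow V. indep_outside V W \<times> two_colourings V W.
      (\<lambda>(S1, S2). ((S1 - S2) \<union> (S2 - S1), S1 \<inter> S2, S1 - S2)) (merge_colouring q) = q"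
  proof clarify
    fix W K W1 assume "W \<subseteq> V" "K \<in> indep_outside V W" "W1 \<in> two_colourings V W"
    then have "K \<inter> W = {}" "W1 \<subseteq> W" using indep_outside_disjoint unfolding two_colourings_def by auto
    then show "(\<lambda>(S1, S2). ((S1 - S2) \<union> (S2 - S1), S1 \<inter> S2, S1 - S2)) (merge_colouring (W, K, W1)) = (W, K, W1)"
      unfolding merge_colouring_def by auto
  qed
  show "\<forall>p\<in>{S. indep V S} \<times> {S. indep V S}.
      merge_colouring ((\<lambda>(S1, S2). ((S1 - S2) \<union> (S2 - S1), S1 \<inter> S2, S1 - S2)) p) = p"
    unfolding merge_colouring_def by auto
  show "merge_colouring ` (SIGMA W:Pow V. indep_outside V W \<times> two_colourings V W) \<subseteq>
      {S. indep V S} \<times> {S. indep V S}"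
  proof (rule image_subsetI)
    fix q assume "q \<in> (SIGMA W:Pow V. indep_outside V W \<times> two_colourings V W)"
    then obtain W K W1 where q: "q = (W, K, W1)" and K: "K \<in> indep_outside V W" and W1: "W1 \<in> two_colourings V W"
      by auto
    have "indep V K" using K unfolding indep_outside_def by auto
    moreover have "\<forall>x\<in>K. \<forall>y\<in>W1. \<not> fadj V x y" "\<forall>x\<in>K. \<forall>y\<in>W - W1. \<not> fadj V x y"
      using indep_outside_nadj[OF K] W1 unfolding two_colourings_def by auto
    ultimately have "indep V (K \<union> W1)" "indep V (K \<union> (W - W1))"
      using W1 unfolding two_colourings_def by (auto intro!: indep_Un)
    then show "merge_colouring q \<in> {S. indep V S} \<times> {S. indep V S}"
      unfolding merge_colouring_def q by auto
  qed
  show "(\<lambda>(S1, S2). ((S1 - S2) \<union> (S2 - S1), S1 \<inter> S2, S1 - S2)) ` ({S. indep V S} \<times> {S. indep V S}) \<subseteq>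
      (SIGMA W:Pow V. indep_outside V W \<times> two_colourings V W)"
  proof (rule image_subsetI)
    fix p assume "p \<in> {S. indep V S} \<times> {S. indep V S}"
    then obtain S1 S2 where p: "p = (S1, S2)" and S: "indep V S1" "indep V S2" by auto
    define W where "W = (S1 - S2) \<union> (S2 - S1)"
    have "W \<subseteq> V" using S unfolding W_def indep_def by auto
    moreover have "S1 \<inter> S2 \<subseteq> V - closed_nbhd V W"
      using S unfolding closed_nbhd_def W_def indep_def by blast
    then have "S1 \<inter> S2 \<in> indep_outside V W" unfolding indep_outside_def using S indep_subset by auto
    moreover have "W - (S1 - S2) = S2 - S1" unfolding W_def by auto
    then have "S1 - S2 \<in> two_colourings V W" unfolding two_colourings_def W_def using S indep_subset by auto
    ultimately show "(\<lambda>(S1, S2). ((S1 - S2) \<union> (S2 - S1), S1 \<inter> S2, S1 - S2)) p \<in>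
        (SIGMA W:Pow V. indep_outside V W \<times> two_colourings V W)"
      unfolding W_def p by auto
  qed
qed

lemma minus_power_mult_power:
  fixes u :: complex
  shows "(- u) ^ (k + m) * u ^ (k + l) = (- u\<^sup>2) ^ k * u ^ (m + l) * (-1) ^ m"
proof -
  have e1: "(- u) ^ (k + m) = ((-1) ^ k * (-1) ^ m) * (u ^ k * u ^ m)"
    by (subst power_minus) (simp add: power_add mult_ac)
  have e2: "(- u\<^sup>2) ^ k = (-1) ^ k * (u ^ k * u ^ k)"
    by (subst power_minus) (simp add: power2_eq_square power_mult_distrib)
  show ?thesis unfolding e1 e2 by (simp only: power_add mult_ac)
qed

lemma minus_square_power_half:
  fixes u :: complex
  assumes "even N"
  shows "(- u\<^sup>2) ^ (N div 2) = (-1) ^ (N div 2) * u ^ N"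
proof -
  obtain m where N: "N = 2 * m" using assms by (auto elim: evenE)
  have "u ^ N = (u\<^sup>2) ^ m" unfolding N by (simp add: power_mult)
  moreover have "(- u\<^sup>2) ^ m = (-1) ^ m * (u\<^sup>2) ^ m" by (rule power_minus)
  ultimately show ?thesis unfolding N by simp
qed

context pauli_hamiltonian
begin

lemma finite_indep_sets: "finite {S. indep V S}"
proof (rule finite_subset)
  show "{S. indep V S} \<subseteq> Pow V" unfolding indep_def by auto
qed (use finite_V in simp)

lemma finite_indep_outside: "finite (indep_outside V W)"
  using finite_indep_sets by (rule finite_subset[rotated]) (auto simp: indep_outside_def)

lemma transfer_terms_mult_merge_colouring:
  assumes K: "K \<in> indep_outside V W" and W1: "W1 \<in> two_colourings V W" and "W \<subseteq> V"
  shows "(((- u) ^ card (K \<union> W1)) \<cdot>\<^sub>m h_set n b (K \<union> W1)) * ((u ^ card (K \<union> (W - W1))) \<cdot>\<^sub>m h_set n b (K \<union> (W - W1)))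
    = ((- u\<^sup>2) ^ card K * (\<Prod>j\<in>K. complex_of_real ((b j)\<^sup>2)) * u ^ card W) \<cdot>\<^sub>m colouring_term W W1"
proof -
  have iK: "indep V K" and KV: "K \<subseteq> V" using K unfolding indep_outside_def indep_def by auto
  have i1: "indep V W1" "indep V (W - W1)" "W1 \<subseteq> W" using W1 unfolding two_colourings_def by auto
  have sub: "W1 \<subseteq> V" "W - W1 \<subseteq> V" using i1 assms(3) by auto
  have dis: "K \<inter> W = {}" using indep_outside_disjoint[OF K] .
  have nadj: "\<forall>x\<in>K. \<forall>y\<in>W1. \<not> fadj V x y" "\<forall>x\<in>K. \<forall>y\<in>W - W1. \<not> fadj V x y"
    using indep_outside_nadj[OF K] i1 by auto
  have fin: "finite K" "finite W1" "finite (W - W1)" using iK i1 indep_finite by auto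
  have "h_set n b (K \<union> W1) = h_set n b K * h_set n b W1"
    using iK i1 nadj dis by (intro h_set_Un indep_Un) auto
  moreover have "h_set n b (K \<union> (W - W1)) = h_set n b K * h_set n b (W - W1)"
    using iK i1 nadj dis by (intro h_set_Un indep_Un) auto
  ultimately have "h_set n b (K \<union> W1) * h_set n b (K \<union> (W - W1)) =
      h_set n b K * (h_set n b W1 * (h_set n b K * h_set n b (W - W1)))"
    using KV sub by simp
  also have "\<dots> = (h_set n b K * h_set n b K) * (h_set n b W1 * h_set n b (W - W1))"
  proof -
    have "h_set n b W1 * h_set n b K = h_set n b K * h_set n b W1"
      using nadj(1) fadj_sym by (intro h_set_commute[OF i1(1) iK]) blast
    then have "h_set n b W1 * (h_set n b K * h_set n b (W - W1)) = h_set n b K * (h_set n b W1 * h_set n b (W - W1))"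
      using KV sub by (intro ops_mult_left_commute) auto
    then show ?thesis using KV sub by simp
  qed
  also have "\<dots> = (\<Prod>j\<in>K. complex_of_real ((b j)\<^sup>2)) \<cdot>\<^sub>m (h_set n b W1 * h_set n b (W - W1))"
    using sub by (simp add: h_set_square[OF iK])
  finally have product: "h_set n b (K \<union> W1) * h_set n b (K \<union> (W - W1)) =
      (\<Prod>j\<in>K. complex_of_real ((b j)\<^sup>2)) \<cdot>\<^sub>m (h_set n b W1 * h_set n b (W - W1))" .
  have cards: "card (K \<union> W1) = card K + card W1" "card (K \<union> (W - W1)) = card K + card (W - W1)"
    using fin dis i1(3) by (subst card_Un_disjoint; auto)+
  have "card W = card W1 + card (W - W1)"
  proof -
    have "W1 \<union> (W - W1) = W" using i1(3) by auto
    then show ?thesis using fin card_Un_disjoint[of W1 "W - W1"] by auto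
  qed
  then have "(- u) ^ card (K \<union> W1) * u ^ card (K \<union> (W - W1)) = (- u\<^sup>2) ^ card K * u ^ card W * (-1) ^ card W1"
    unfolding cards by (simp only: minus_power_mult_power)
  moreover have "(((- u) ^ card (K \<union> W1)) \<cdot>\<^sub>m h_set n b (K \<union> W1)) * ((u ^ card (K \<union> (W - W1))) \<cdot>\<^sub>m h_set n b (K \<union> (W - W1)))
      = ((- u) ^ card (K \<union> W1) * u ^ card (K \<union> (W - W1))) \<cdot>\<^sub>m (h_set n b (K \<union> W1) * h_set n b (K \<union> (W - W1)))"
    using KV sub by (simp add: mult.commute)
  ultimately show ?thesis unfolding product colouring_term_def using sub by (simp add: mult_ac)
qed

lemma Zop_eq_sum_colouring_sums:
  "Zop n V b u = mat_sum (2^n)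
     (\<lambda>W. (indep_poly V b (V - closed_nbhd V W) (- u\<^sup>2) * u ^ card W) \<cdot>\<^sub>m colouring_sum W) (Pow V)"
proof -
  let ?Q = "SIGMA W:Pow V. indep_outside V W \<times> two_colourings V W"
  let ?G = "\<lambda>p. (((- u) ^ card (fst p)) \<cdot>\<^sub>m h_set n b (fst p)) * ((u ^ card (snd p)) \<cdot>\<^sub>m h_set n b (snd p))"
  let ?c = "\<lambda>W K. (- u\<^sup>2) ^ card K * (\<Prod>j\<in>K. complex_of_real ((b j)\<^sup>2)) * u ^ card W"
  have "Zop n V b u = mat_sum (2^n) ?G ({S. indep V S} \<times> {S. indep V S})"
    unfolding Zop_def transfer_def
    by (subst mat_sum_mult[OF finite_indep_sets finite_indep_sets]) (auto simp: indep_def)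
  also have "\<dots> = mat_sum (2^n) (\<lambda>q. ?G (merge_colouring q)) ?Q"
    by (rule mat_sum_reindex_bij_betw[symmetric, OF merge_colouring_bij])
  also have "\<dots> = mat_sum (2^n) (\<lambda>q. ?c (fst q) (fst (snd q)) \<cdot>\<^sub>m colouring_term (fst q) (snd (snd q))) ?Q"
    by (rule mat_sum_cong) (auto simp: merge_colouring_def transfer_terms_mult_merge_colouring)
  also have "\<dots> = mat_sum (2^n) (\<lambda>W. mat_sum (2^n) (\<lambda>r. ?c W (fst r) \<cdot>\<^sub>m colouring_term W (snd r))
      (indep_outside V W \<times> two_colourings V W)) (Pow V)"
  proof (rule mat_sum_Sigma)
    show "\<forall>W\<in>Pow V. finite (indep_outside V W \<times> two_colourings V W)"
      using finite_indep_outside two_colourings_finite finite_subset[OF _ finite_V] by blast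
  qed (use finite_V in simp)
  also have "\<dots> = mat_sum (2^n) (\<lambda>W. (\<Sum>K\<in>indep_outside V W. ?c W K) \<cdot>\<^sub>m colouring_sum W) (Pow V)"
  proof (rule mat_sum_cong[OF refl])
    fix W assume "W \<in> Pow V"
    then have terms: "\<forall>W1\<in>two_colourings V W. colouring_term W W1 \<in> ops" using colouring_term_carrier by auto
    have "mat_sum (2^n) (\<lambda>r. ?c W (fst r) \<cdot>\<^sub>m colouring_term W (snd r)) (indep_outside V W \<times> two_colourings V W)
        = mat_sum (2^n) (\<lambda>K. mat_sum (2^n) (\<lambda>W1. ?c W K \<cdot>\<^sub>m colouring_term W W1) (two_colourings V W)) (indep_outside V W)"
      using mat_sum_Sigma[of "indep_outside V W" "\<lambda>K. two_colourings V W" "2^n" "\<lambda>K W1. ?c W K \<cdot>\<^sub>m colouring_term W W1"]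
        finite_indep_outside two_colourings_finite \<open>W \<in> Pow V\<close> finite_subset[OF _ finite_V] by simp
    also have "\<dots> = mat_sum (2^n) (\<lambda>K. ?c W K \<cdot>\<^sub>m colouring_sum W) (indep_outside V W)"
      unfolding colouring_sum_def using smult_mat_sum[OF terms] by simp
    also have "\<dots> = (\<Sum>K\<in>indep_outside V W. ?c W K) \<cdot>\<^sub>m colouring_sum W"
      by (rule mat_sum_smult_const) simp
    finally show "mat_sum (2^n) (\<lambda>r. ?c W (fst r) \<cdot>\<^sub>m colouring_term W (snd r)) (indep_outside V W \<times> two_colourings V W)
        = (\<Sum>K\<in>indep_outside V W. ?c W K) \<cdot>\<^sub>m colouring_sum W" .
  qed
  also have "\<dots> = mat_sum (2^n) (\<lambda>W. (indep_poly V b (V - closed_nbhd V W) (- u\<^sup>2) * u ^ card W) \<cdot>\<^sub>m colouring_sum W) (Pow V)"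
    unfolding indep_poly_def indep_outside_def by (simp add: sum_distrib_right)
  finally show ?thesis .
qed

end

theorem lemma11:
  fixes n :: nat and V :: "pauli list set" and b :: "pauli list \<Rightarrow> real" and u :: complex
  assumes "finite V"
    and "\<forall>j\<in>V. length j = n"
    and "\<forall>j\<in>V. b j \<noteq> 0"
    and "claw_free V"
  shows "Zop n V b u =
    mat_sum (2 ^ n)
      (\<lambda>X. ((- u\<^sup>2) ^ (card (\<Union>X) div 2) * 2 ^ card X
              * indep_poly V b (V - closed_nbhd V (\<Union>X)) (- u\<^sup>2))
            \<cdot>\<^sub>m set_prod (2 ^ n) (h_hole n V b) X)
      (even_hole_configs V)"
proof -
  interpret claw_free_hamiltonian n V b
    using assms(1,2,4) by unfold_locales auto
  let ?c = "\<lambda>W. indep_poly V b (V - closed_nbhd V W) (- u\<^sup>2) * u ^ card W"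
  have "Zop n V b u = mat_sum (2^n) (\<lambda>W. ?c W \<cdot>\<^sub>m colouring_sum W) (Pow V)"
    by (rule Zop_eq_sum_colouring_sums)
  also have "\<dots> = mat_sum (2^n) (\<lambda>X. ?c (\<Union>X) \<cdot>\<^sub>m colouring_sum (\<Union>X)) (even_hole_configs V)"
    by (rule mat_sum_colouring_sums_eq_sum_even_hole_configs)
  also have "\<dots> = mat_sum (2 ^ n)
      (\<lambda>X. ((- u\<^sup>2) ^ (card (\<Union>X) div 2) * 2 ^ card X
              * indep_poly V b (V - closed_nbhd V (\<Union>X)) (- u\<^sup>2))
            \<cdot>\<^sub>m set_prod (2 ^ n) (h_hole n V b) X)
      (even_hole_configs V)"
    using colouring_sum_Union_even_hole_config minus_square_power_half[OF even_card_Union_even_hole_config[OF assms(1)]]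
    by (intro mat_sum_cong) (simp_all add: mult_ac)
  finally show ?thesis .
qed

end
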